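(* Let $\{Z_n\}$ be a Galton–Watson branching process with $Z_0=1$ and $Z_n=\sum_{i=1}^{Z_{n-1}}\xi_{n,i}$, where $\{\xi_{n,i}\}$ are i.i.d. nonnegative integer-valued random variables with generic copy $\xi$, and let $\alpha=E\xi<1$. If $\xi$ is regularly varying with index $\kappa>1$, i.e. $P(\xi>x)=x^{-\kappa}L(x)$ with $L$ slowly varying, then for every $n\ge1$, as $x\to\infty$, $$P(Z_n>x)\sim \frac{\alpha^n-\alpha^{\kappa n}}{\alpha-\alpha^{\kappa}}P(\xi>x).$$
   Context: A function $L$ is slowly varying if $L(tx)/L(x)\to1$ as $x\to\infty$ for all $t>0$. $f\sim g$ means $f(x)/g(x)\to 1$ as $x\to\infty$. *)

theory Defs
  imports "HOL-Probability.Probability" "HOL-Library.Landau_Symbols"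
begin

definition slowly_varying :: "(real \<Rightarrow> real) \<Rightarrow> bool" where
  "slowly_varying L \<longleftrightarrow> (\<forall>t>0. ((\<lambda>x. L (t * x) / L x) \<longlongrightarrow> 1) at_top)"

fun gw_Z :: "(nat \<Rightarrow> nat \<Rightarrow> 'a \<Rightarrow> nat) \<Rightarrow> nat \<Rightarrow> 'a \<Rightarrow> nat" where
  "gw_Z \<xi> 0 \<omega> = 1"
| "gw_Z \<xi> (Suc n) \<omega> = (\<Sum>i\<in>{1..gw_Z \<xi> n \<omega>}. \<xi> (Suc n) i \<omega>)"

end

theory Submission
  imports Defs "HOL-Real_Asymp.Real_Asymp"
begin

(*
  Given Z n, the next generation Z (n + 1) is the sum of
  Z n independent copies of xi, independent of Z n.  For such a random sum S_N with E N = m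
  and P(N > x) ~ c P(xi > x) one has P(S_N > x) ~ (m + c alpha^kappa) P(xi > x): as long as
  N <= (1 - eps) x / alpha, the sum exceeds x essentially only through a single large summand,
  which contributes E N * P(xi > x); for larger N the law of large numbers gives S_N ~ alpha N,
  so this range contributes P(N > x / alpha) ~ c alpha^kappa P(xi > x).  Large deviations of the
  truncated sums are controlled by a Chernoff bound at the scale x / ln x together with Potter
  bounds for the regularly varying tail.  Since E Z_n = alpha^n, the constants c_n with
  P(Z_n > x) ~ c_n P(xi > x) satisfy c_0 = 0 and c_(n+1) = alpha^n + alpha^kappa c_n, whose
  solution is c_n = (alpha^n - alpha^(kappa n)) / (alpha - alpha^kappa).
*)

lemma tendsto_rescale_at_top:
  fixes f :: "real \<Rightarrow> 'b::topological_space"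
  assumes "(f \<longlongrightarrow> l) at_top" and "t > 0"
  shows "((\<lambda>x. f (t * x)) \<longlongrightarrow> l) at_top"
proof -
  have "filterlim (\<lambda>x. t * x) at_top at_top" using \<open>t > 0\<close> by real_asymp
  then show ?thesis by (rule filterlim_compose[OF assms(1)])
qed

lemma eventually_at_right_0_witness:
  assumes "\<forall>\<^sub>F y in at_right (0::real). P y"
  shows "\<exists>\<eta>. 0 < \<eta> \<and> \<eta> < 1 \<and> P \<eta>"
proof -
  obtain b where "b > 0" "\<And>y. y > 0 \<Longrightarrow> y < b \<Longrightarrow> P y"
    using assms unfolding eventually_at_right_field by auto
  then show ?thesis by (intro exI[of _ "min (b/2) (1/2)"]) auto
qed

lemma dyadic_induct:
  fixes x0 :: real
  assumes "0 < x0"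
    and base: "\<And>x. x0 \<le> x \<Longrightarrow> x \<le> 2 * x0 \<Longrightarrow> P x"
    and double: "\<And>x. x0 \<le> x \<Longrightarrow> P x \<Longrightarrow> P (2 * x)"
  shows "\<forall>x\<ge>x0. P x"
proof (intro allI impI)
  have shell: "\<forall>x. x0 \<le> x \<longrightarrow> x \<le> 2 ^ Suc j * x0 \<longrightarrow> P x" for j
  proof (induction j)
    case 0
    then show ?case using base by auto
  next
    case (Suc j)
    show ?case
    proof (intro allI impI)
      fix x assume x: "x0 \<le> x" "x \<le> 2 ^ Suc (Suc j) * x0"
      show "P x"
      proof (cases "x \<le> 2 * x0")
        case True
        then show ?thesis using base x by blast
      next
        case False
        then have "x0 \<le> x / 2" by simp
        moreover from this have "P (x / 2)" using Suc.IH x by auto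
        ultimately show ?thesis using double[of "x / 2"] by simp
      qed
    qed
  qed
  fix x assume "x0 \<le> x"
  obtain j where "x / x0 < 2 ^ j" using real_arch_pow[of 2 "x / x0"] by auto
  then have "x < 2 ^ j * x0" using \<open>0 < x0\<close> by (simp add: field_simps)
  also have "\<dots> \<le> 2 ^ Suc j * x0" using \<open>0 < x0\<close> by simp
  finally have "x \<le> 2 ^ Suc j * x0" by simp
  then show "P x" using shell \<open>x0 \<le> x\<close> by blast
qed

lemma one_minus_power_le_quadratic:
  fixes p :: real
  assumes "0 \<le> p" "p \<le> 1"
  shows "(1 - p) ^ k \<le> 1 - real k * p + (real k)\<^sup>2 * p\<^sup>2"
proof (induction k)
  case 0
  then show ?case by simp
next
  case (Suc k)
  have "(1 - p) ^ Suc k \<le> (1 - p) * (1 - real k * p + (real k)\<^sup>2 * p\<^sup>2)"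
    using Suc.IH assms by (simp add: mult_left_mono)
  also have "\<dots> = 1 - real (Suc k) * p + (real (Suc k))\<^sup>2 * p\<^sup>2
      - ((real k + 1) * p\<^sup>2 + (real k)\<^sup>2 * p ^ 3)"
    by (simp add: algebra_simps power2_eq_square power3_eq_cube)
  also have "\<dots> \<le> 1 - real (Suc k) * p + (real (Suc k))\<^sup>2 * p\<^sup>2"
  proof -
    have "0 \<le> (real k + 1) * p\<^sup>2 + (real k)\<^sup>2 * p ^ 3" using assms by simp
    then show ?thesis by linarith
  qed
  finally show ?case .
qed

lemma exp_mult_le_split:
  fixes h w s T :: real
  assumes "0 \<le> w" "w \<le> T" "h > 0" "s > 0" "h * s \<le> 1"
  shows "exp (h * w) \<le> 1 + h * (1 + h * s) * w + (if w > s then exp (h * T) else 0)"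
proof (cases "w > s")
  case True
  have "exp (h * w) \<le> exp (h * T)" using assms by simp
  moreover have "0 \<le> h * (1 + h * s) * w" using assms by simp
  ultimately have "exp (h * w) \<le> 1 + h * (1 + h * s) * w + exp (h * T)" by linarith
  with True show ?thesis by simp
next
  case False
  then have "h * w \<le> h * s" using assms by (intro mult_left_mono) auto
  then have "h * w \<le> 1" using assms by linarith
  moreover have "0 \<le> h * w" using assms by simp
  ultimately have "exp (h * w) \<le> 1 + h * w + (h * w)\<^sup>2" by (intro exp_bound)
  also have "(h * w)\<^sup>2 = h * (h * w) * w" by (simp add: power2_eq_square)
  also have "\<dots> \<le> h * (h * s) * w"
    using assms False by (intro mult_right_mono mult_left_mono) auto
  finally show ?thesis using False by (simp add: algebra_simps)
qed

lemma sum_min_ge_of_one_large: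
  fixes y :: "nat \<Rightarrow> real"
  assumes sum: "x < (\<Sum>i<k. y i)" and "0 \<le> x" "0 \<le> \<eta>" "\<eta> \<le> 1" "0 \<le> c"
    and y: "\<And>i. i < k \<Longrightarrow> y i \<le> (1 - \<eta>) * x"
    and one: "\<And>i j. i < j \<Longrightarrow> j < k \<Longrightarrow> y i \<le> c \<or> y j \<le> c"
  shows "\<eta> * x \<le> (\<Sum>i<k. min (y i) c)"
proof (cases "\<forall>i<k. y i \<le> c")
  case True
  then have "(\<Sum>i<k. min (y i) c) = (\<Sum>i<k. y i)" by (intro sum.cong) auto
  moreover have "\<eta> * x \<le> x" using assms by (intro mult_left_le_one_le) auto
  ultimately show ?thesis using sum by linarith
next
  case False
  then obtain i0 where i0: "i0 < k" "c < y i0" by auto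
  have others: "y j \<le> c" if "j < k" "j \<noteq> i0" for j
    using one[of j i0] one[of i0 j] i0 that by (cases "j < i0") auto
  have "(\<Sum>i<k. min (y i) c) = min (y i0) c + (\<Sum>i\<in>{..<k}-{i0}. min (y i) c)"
    using i0 by (intro sum.remove) auto
  also have "(\<Sum>i\<in>{..<k}-{i0}. min (y i) c) = (\<Sum>i\<in>{..<k}-{i0}. y i)"
    using others by (intro sum.cong) auto
  also have "\<dots> = (\<Sum>i<k. y i) - y i0"
    using sum.remove[of "{..<k}" i0 y] i0 by simp
  finally have "(\<Sum>i<k. min (y i) c) = min (y i0) c + ((\<Sum>i<k. y i) - y i0)" .
  moreover have "0 \<le> min (y i0) c" using \<open>0 \<le> c\<close> i0 by simp
  moreover have "y i0 \<le> x - \<eta> * x" using y[OF i0(1)] by (simp add: algebra_simps)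
  ultimately show ?thesis using sum by linarith
qed

section \<open>Regularly varying tails\<close>

locale regularly_varying_tail = prob_space M for M :: "'a measure" +
  fixes X :: "'a \<Rightarrow> nat" and \<kappa> :: real and L :: "real \<Rightarrow> real"
  assumes X_measurable[measurable]: "X \<in> measurable M (count_space UNIV)"
    and kappa_gt_1: "\<kappa> > 1"
    and slowly_varying_L: "slowly_varying L"
    and tail_eq: "\<And>x. x > 0 \<Longrightarrow> prob {\<omega> \<in> space M. real (X \<omega>) > x} = x powr (-\<kappa>) * L x"
begin

definition tail :: "real \<Rightarrow> real" where
  "tail x = prob {\<omega> \<in> space M. real (X \<omega>) > x}"

definition \<alpha> :: real where
  "\<alpha> = expectation (\<lambda>\<omega>. real (X \<omega>))"

lemma tail_nonneg: "0 \<le> tail x"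
  by (simp add: tail_def)

lemma tail_le_1: "tail x \<le> 1"
  by (simp add: tail_def)

lemma tail_antimono: "x \<le> y \<Longrightarrow> tail y \<le> tail x"
  unfolding tail_def by (intro finite_measure_mono) auto

lemma tendsto_tail_ratio:
  assumes "t > 0"
  shows "((\<lambda>x. tail (t * x) / tail x) \<longlongrightarrow> t powr (-\<kappa>)) at_top"
proof -
  have "((\<lambda>x. t powr (-\<kappa>) * (L (t * x) / L x)) \<longlongrightarrow> t powr (-\<kappa>) * 1) at_top"
    using slowly_varying_L assms unfolding slowly_varying_def by (intro tendsto_mult_left) auto
  moreover have "\<forall>\<^sub>F x in at_top. t powr (-\<kappa>) * (L (t * x) / L x) = tail (t * x) / tail x"
    using eventually_gt_at_top[of 0]
  proof eventually_elim
    case (elim x)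
    then show ?case
      using assms by (simp add: tail_def tail_eq powr_mult field_simps)
  qed
  ultimately show ?thesis by (simp add: tendsto_cong)
qed

lemma eventually_tail_pos: "\<forall>\<^sub>F x in at_top. tail x > 0"
proof -
  have "\<forall>\<^sub>F x in at_top. tail (1 * x) / tail x > 1 / 2"
    using tendsto_tail_ratio[of 1] by (intro order_tendstoD) auto
  then show ?thesis
  proof eventually_elim
    case (elim x)
    then have "tail x \<noteq> 0" by auto
    then show ?case using tail_nonneg[of x] by simp
  qed
qed

lemma Potter_upper:
  assumes "0 < a" "a < \<kappa>"
  shows "\<exists>C x0. 0 < C \<and> 1 \<le> x0 \<and> (\<forall>x\<ge>x0. tail x \<le> C * x powr (-a))"
proof -
  have "\<forall>\<^sub>F x in at_top. tail (2 * x) / tail x < 2 powr (-a)"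
    using tendsto_tail_ratio[of 2] assms by (intro order_tendstoD) auto
  then have "\<forall>\<^sub>F x in at_top. tail (2 * x) \<le> 2 powr (-a) * tail x"
    using eventually_tail_pos by eventually_elim (simp add: divide_less_eq)
  then obtain N where N: "\<And>x. x \<ge> N \<Longrightarrow> tail (2 * x) \<le> 2 powr (-a) * tail x"
    by (auto simp: eventually_at_top_linorder)
  define x0 where "x0 = max N 1"
  define C where "C = (2 * x0) powr a"
  have x0: "1 \<le> x0" "N \<le> x0" by (auto simp: x0_def)
  have "\<forall>x\<ge>x0. tail x \<le> C * x powr (-a)"
  proof (rule dyadic_induct)
    fix x assume x: "x0 \<le> x" "x \<le> 2 * x0"
    have "1 \<le> (2 * x0 / x) powr a"
      using x x0 assms by (intro ge_one_powr_ge_zero) auto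
    also have "\<dots> = C * x powr (-a)"
      by (subst powr_divide) (use x x0 in \<open>auto simp: C_def powr_minus divide_inverse\<close>)
    finally show "tail x \<le> C * x powr (-a)" using tail_le_1[of x] by linarith
  next
    fix x assume x: "x0 \<le> x" and IH: "tail x \<le> C * x powr (-a)"
    have "tail (2 * x) \<le> 2 powr (-a) * tail x" using N x x0 by simp
    also have "\<dots> \<le> 2 powr (-a) * (C * x powr (-a))" using IH by simp
    also have "\<dots> = C * (2 * x) powr (-a)" using x x0 by (simp add: powr_mult)
    finally show "tail (2 * x) \<le> C * (2 * x) powr (-a)" .
  qed (use x0 in simp)
  moreover have "C > 0" using x0 by (simp add: C_def)
  ultimately show ?thesis using x0 by blast
qed

lemma Potter_lower:
  assumes "\<kappa> < b"
  shows "\<exists>c x0. 0 < c \<and> 1 \<le> x0 \<and> (\<forall>x\<ge>x0. c * x powr (-b) \<le> tail x)"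
proof -
  have "\<forall>\<^sub>F x in at_top. 2 powr (-b) < tail (2 * x) / tail x"
    using tendsto_tail_ratio[of 2] assms by (intro order_tendstoD) auto
  then have "\<forall>\<^sub>F x in at_top. 2 powr (-b) * tail x \<le> tail (2 * x) \<and> tail x > 0"
    using eventually_tail_pos by eventually_elim (simp add: less_divide_eq)
  then obtain N where N: "\<And>x. x \<ge> N \<Longrightarrow> 2 powr (-b) * tail x \<le> tail (2 * x) \<and> tail x > 0"
    by (auto simp: eventually_at_top_linorder)
  define x0 where "x0 = max N 1"
  define c where "c = tail (2 * x0) * x0 powr b"
  have x0: "1 \<le> x0" "N \<le> x0" by (auto simp: x0_def)
  have "\<forall>x\<ge>x0. c * x powr (-b) \<le> tail x"
  proof (rule dyadic_induct)
    fix x assume x: "x0 \<le> x" "x \<le> 2 * x0"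
    have "c * x powr (-b) \<le> c * x0 powr (-b)"
      using x x0 assms kappa_gt_1 tail_nonneg
      by (intro mult_left_mono) (auto simp: c_def powr_minus intro!: le_imp_inverse_le powr_mono2)
    also have "\<dots> = tail (2 * x0)" using x0 by (simp add: c_def powr_minus)
    also have "\<dots> \<le> tail x" using x by (intro tail_antimono)
    finally show "c * x powr (-b) \<le> tail x" .
  next
    fix x assume x: "x0 \<le> x" and IH: "c * x powr (-b) \<le> tail x"
    have "c * (2 * x) powr (-b) = 2 powr (-b) * (c * x powr (-b))"
      using x x0 by (simp add: powr_mult)
    also have "\<dots> \<le> 2 powr (-b) * tail x" using IH by simp
    also have "\<dots> \<le> tail (2 * x)" using N x x0 by simp
    finally show "c * (2 * x) powr (-b) \<le> tail (2 * x)" .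
  qed (use x0 in simp)
  moreover have "c > 0" using N[of "2 * x0"] x0 by (simp add: c_def)
  ultimately show ?thesis using x0 by auto
qed

lemma tendsto_x_times_tail_0: "((\<lambda>x. x * tail x) \<longlongrightarrow> 0) at_top"
proof -
  define a where "a = (\<kappa> + 1) / 2"
  have a: "1 < a" "a < \<kappa>" using kappa_gt_1 by (auto simp: a_def)
  obtain C x0 where C: "0 < C" "1 \<le> x0" "\<And>x. x \<ge> x0 \<Longrightarrow> tail x \<le> C * x powr (-a)"
    using Potter_upper[of a] a by auto
  have lim: "((\<lambda>x::real. C * x powr (1 - a)) \<longlongrightarrow> 0) at_top"
    using a C(1) by real_asymp
  have upper: "\<forall>\<^sub>F x in at_top. x * tail x \<le> C * x powr (1 - a)"
    using eventually_ge_at_top[of x0]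
  proof eventually_elim
    case (elim x)
    then have "x * tail x \<le> x * (C * x powr (-a))" using C by (intro mult_left_mono) auto
    also have "\<dots> = C * x powr (1 - a)" using elim C by (simp add: powr_diff powr_minus field_simps)
    finally show ?case .
  qed
  have lower: "\<forall>\<^sub>F x in at_top. 0 \<le> x * tail x"
    using eventually_ge_at_top[of 0] by eventually_elim (simp add: tail_nonneg)
  show ?thesis by (rule tendsto_sandwich[OF lower upper tendsto_const lim])
qed

lemma tendsto_powr_div_tail_0:
  assumes "\<kappa> < b"
  shows "((\<lambda>x. x powr (-b) / tail x) \<longlongrightarrow> 0) at_top"
proof -
  obtain c x0 where c: "0 < c" "1 \<le> x0" "\<And>x. x \<ge> x0 \<Longrightarrow> c * x powr (-((\<kappa> + b) / 2)) \<le> tail x"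
    using Potter_lower[of "(\<kappa> + b) / 2"] assms by auto
  have lim: "((\<lambda>x::real. x powr ((\<kappa> - b) / 2) / c) \<longlongrightarrow> 0) at_top"
    using assms c(1) by real_asymp
  have upper: "\<forall>\<^sub>F x in at_top. x powr (-b) / tail x \<le> x powr ((\<kappa> - b) / 2) / c"
    using eventually_ge_at_top[of x0]
  proof eventually_elim
    case (elim x)
    then have pos: "0 < c * x powr (-((\<kappa> + b) / 2))" using c by simp
    have "x powr (-b) / tail x \<le> x powr (-b) / (c * x powr (-((\<kappa> + b) / 2)))"
      using pos c(3)[OF elim] by (intro divide_left_mono) auto
    also have "\<dots> = x powr ((\<kappa> - b) / 2) / c"
      using elim c by (simp add: powr_diff[symmetric] field_simps)
    finally show ?case .
  qed
  have lower: "\<forall>\<^sub>F x in at_top. 0 \<le> x powr (-b) / tail x"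
    by (simp add: tail_nonneg)
  show ?thesis by (rule tendsto_sandwich[OF lower upper tendsto_const lim])
qed

text \<open>Controls the summands above the truncation level \<open>x / (ln x)\<^sup>2\<close> in the Chernoff bound.\<close>
lemma tendsto_powr_times_tail_log_scale_0:
  assumes "0 < d" "1 + d < \<kappa>"
  shows "((\<lambda>x. x powr (1 + d) * tail (x / (ln x)\<^sup>2)) \<longlongrightarrow> 0) at_top"
proof -
  define a where "a = (1 + d + \<kappa>) / 2"
  have a: "0 < a" "1 + d < a" "a < \<kappa>" using assms by (auto simp: a_def)
  obtain C x0 where C: "0 < C" "\<And>x. x \<ge> x0 \<Longrightarrow> tail x \<le> C * x powr (-a)"
    using Potter_upper[of a] a by auto
  have lim: "((\<lambda>x::real. C * (x powr (1 + d) * (x / (ln x)\<^sup>2) powr (-a))) \<longlongrightarrow> 0) at_top"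
    using a C(1) by real_asymp
  have upper: "\<forall>\<^sub>F x in at_top. x powr (1 + d) * tail (x / (ln x)\<^sup>2)
      \<le> C * (x powr (1 + d) * (x / (ln x)\<^sup>2) powr (-a))"
  proof -
    have "\<forall>\<^sub>F x in at_top. x0 \<le> x / (ln x)\<^sup>2" by real_asymp
    then show ?thesis
    proof eventually_elim
      case (elim x)
      have "x powr (1 + d) * tail (x / (ln x)\<^sup>2) \<le> x powr (1 + d) * (C * (x / (ln x)\<^sup>2) powr (-a))"
        by (intro mult_left_mono C(2) elim) simp
      then show ?case by (simp add: mult_ac)
    qed
  qed
  have lower: "\<forall>\<^sub>F x in at_top. 0 \<le> x powr (1 + d) * tail (x / (ln x)\<^sup>2)"
    by (simp add: tail_nonneg)
  show ?thesis by (rule tendsto_sandwich[OF lower upper tendsto_const lim])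
qed

lemma nn_integral_X_eq_tail_sum:
  "(\<integral>\<^sup>+\<omega>. ennreal (real (X \<omega>)) \<partial>M) = (\<Sum>j. ennreal (tail (real j)))"
proof -
  have "(\<integral>\<^sup>+\<omega>. ennreal (real (X \<omega>)) \<partial>M)
      = (\<integral>\<^sup>+\<omega>. (\<Sum>j. indicator {\<omega>\<in>space M. X \<omega> > j} \<omega>) \<partial>M)"
  proof (intro nn_integral_cong)
    fix \<omega> assume \<omega>: "\<omega> \<in> space M"
    have "(\<Sum>j. indicator {\<omega>\<in>space M. X \<omega> > j} \<omega> :: ennreal)
        = (\<Sum>j<X \<omega>. indicator {\<omega>\<in>space M. X \<omega> > j} \<omega>)"
      by (rule suminf_finite) (use \<omega> in \<open>auto simp: indicator_def\<close>)
    also have "\<dots> = ennreal (real (X \<omega>))"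
      using \<omega> by (simp add: indicator_def ennreal_of_nat_eq_real_of_nat)
    finally show "ennreal (real (X \<omega>)) = (\<Sum>j. indicator {\<omega>\<in>space M. X \<omega> > j} \<omega>)" by simp
  qed
  also have "\<dots> = (\<Sum>j. \<integral>\<^sup>+\<omega>. indicator {\<omega>\<in>space M. X \<omega> > j} \<omega> \<partial>M)"
    by (rule nn_integral_suminf) simp
  also have "\<dots> = (\<Sum>j. ennreal (tail (real j)))"
    by (simp add: tail_def emeasure_eq_measure)
  finally show ?thesis .
qed

lemma summable_tail_nat: "summable (\<lambda>j. tail (real j))"
proof -
  define a where "a = (\<kappa> + 1) / 2"
  have a: "1 < a" "a < \<kappa>" using kappa_gt_1 by (auto simp: a_def)
  obtain C x0 where C: "\<And>x. x \<ge> x0 \<Longrightarrow> tail x \<le> C * x powr (-a)"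
    using Potter_upper[of a] a by auto
  show ?thesis
  proof (rule summable_comparison_test_ev)
    show "summable (\<lambda>j. C * real j powr (-a))"
      using a by (intro summable_mult) (simp add: summable_real_powr_iff)
    have "\<forall>\<^sub>F j in sequentially. x0 \<le> real j"
      using filterlim_real_sequentially unfolding filterlim_at_top by blast
    then show "\<forall>\<^sub>F j in sequentially. norm (tail (real j)) \<le> C * real j powr (-a)"
      by eventually_elim (use C tail_nonneg in auto)
  qed
qed

lemma tail_nat_sums_alpha: "(\<lambda>j. tail (real j)) sums \<alpha>" and integrable_X: "integrable M (\<lambda>\<omega>. real (X \<omega>))"
proof -
  have "(\<lambda>j. ennreal (tail (real j))) sums ennreal (\<Sum>j. tail (real j))"
    using summable_tail_nat tail_nonneg
    by (subst sums_ennreal) (auto intro: suminf_nonneg summable_sums)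
  then have nn: "(\<integral>\<^sup>+\<omega>. ennreal (real (X \<omega>)) \<partial>M) = ennreal (\<Sum>j. tail (real j))"
    unfolding nn_integral_X_eq_tail_sum by (rule sums_unique[symmetric])
  then show int: "integrable M (\<lambda>\<omega>. real (X \<omega>))"
    by (intro integrableI_nn_integral_finite) auto
  have "ennreal \<alpha> = (\<integral>\<^sup>+\<omega>. ennreal (real (X \<omega>)) \<partial>M)"
    unfolding \<alpha>_def by (rule nn_integral_eq_integral[OF int, symmetric]) auto
  then have "\<alpha> = (\<Sum>j. tail (real j))"
    unfolding nn using summable_tail_nat tail_nonneg
    by (subst (asm) ennreal_inj) (auto simp: \<alpha>_def intro: suminf_nonneg)
  then show "(\<lambda>j. tail (real j)) sums \<alpha>" using summable_tail_nat by (simp add: summable_sums)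
qed

lemma alpha_pos: "\<alpha> > 0"
proof -
  obtain N where N: "\<And>x. x \<ge> N \<Longrightarrow> tail x > 0"
    using eventually_tail_pos by (auto simp: eventually_at_top_linorder)
  have "0 < tail (real (nat \<lceil>N\<rceil>))" by (rule N) linarith
  also have "\<dots> \<le> \<alpha>"
    using sum_le_suminf[OF summable_tail_nat, of "{nat \<lceil>N\<rceil>}"] tail_nonneg
    by (simp add: sums_unique[OF tail_nat_sums_alpha])
  finally show ?thesis .
qed

lemma powr_kappa_less_alpha:
  assumes "\<alpha> < 1"
  shows "\<alpha> powr \<kappa> < \<alpha>"
  using powr_less_mono'[of \<alpha> 1 \<kappa>] alpha_pos assms kappa_gt_1 by simp

lemma tendsto_expectation_min_X:
  "(\<lambda>T. expectation (\<lambda>\<omega>. min (real (X \<omega>)) (real T))) \<longlonglongrightarrow> \<alpha>"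
proof -
  have "expectation (\<lambda>\<omega>. min (real (X \<omega>)) (real T)) = (\<Sum>j<T. tail (real j))" for T
  proof -
    have "expectation (\<lambda>\<omega>. min (real (X \<omega>)) (real T))
        = expectation (\<lambda>\<omega>. \<Sum>j<T. indicator {\<omega>\<in>space M. X \<omega> > j} \<omega>)"
    proof (intro Bochner_Integration.integral_cong refl)
      fix \<omega> assume \<omega>: "\<omega> \<in> space M"
      have "(\<Sum>j<T. indicator {\<omega>\<in>space M. X \<omega> > j} \<omega> :: real) = card ({..<T} \<inter> {..<X \<omega>})"
        using \<omega> by (simp add: indicator_def sum.If_cases Int_def)
      also have "{..<T} \<inter> {..<X \<omega>} = {..<min T (X \<omega>)}" by auto
      finally show "min (real (X \<omega>)) (real T) = (\<Sum>j<T. indicator {\<omega>\<in>space M. X \<omega> > j} \<omega>)"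
        by simp
    qed
    also have "\<dots> = (\<Sum>j<T. expectation (indicator {\<omega>\<in>space M. X \<omega> > j}))"
      by (rule Bochner_Integration.integral_sum)
        (auto intro!: integrable_real_indicator simp: less_top[symmetric])
    also have "\<dots> = (\<Sum>j<T. tail (real j))" by (simp add: tail_def)
    finally show ?thesis .
  qed
  then show ?thesis using tail_nat_sums_alpha by (simp add: sums_def)
qed

lemma truncated_mgf_le:
  assumes h: "h > 0" and s: "0 < s" "s < T" and hs: "h * s \<le> 1"
  shows "expectation (\<lambda>\<omega>. exp (h * min (real (X \<omega>)) T))
    \<le> exp (h * \<alpha> * (1 + h * s) + exp (h * T) * tail s)"
proof -
  define B where "B \<omega> = 1 + h * (1 + h * s) * min (real (X \<omega>)) T
      + exp (h * T) * indicator {\<omega>\<in>space M. real (X \<omega>) > s} \<omega>" for \<omega>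
  have int_min: "integrable M (\<lambda>\<omega>. min (real (X \<omega>)) T)"
    using s by (intro integrable_const_bound[where B = T]) auto
  have int_ind: "integrable M (indicator {\<omega>\<in>space M. real (X \<omega>) > s} :: 'a \<Rightarrow> real)"
    by (intro integrable_const_bound[where B = 1]) (auto simp: indicator_def)
  have "expectation (\<lambda>\<omega>. exp (h * min (real (X \<omega>)) T)) \<le> expectation B"
  proof (rule integral_mono)
    show "integrable M (\<lambda>\<omega>. exp (h * min (real (X \<omega>)) T))"
      using h by (intro integrable_const_bound[where B = "exp (h * T)"]) auto
    show "integrable M B" unfolding B_def using int_min int_ind by auto
    fix \<omega> assume "\<omega> \<in> space M"
    then show "exp (h * min (real (X \<omega>)) T) \<le> B \<omega>"
      using exp_mult_le_split[of "min (real (X \<omega>)) T" T h s] h s hs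
      by (auto simp: B_def indicator_def)
  qed
  also have "\<dots> = expectation (\<lambda>\<omega>. 1 + h * (1 + h * s) * min (real (X \<omega>)) T)
      + expectation (\<lambda>\<omega>. exp (h * T) * indicator {\<omega>\<in>space M. real (X \<omega>) > s} \<omega>)"
    unfolding B_def using int_min int_ind by (intro Bochner_Integration.integral_add) auto
  also have "\<dots> = 1 + h * (1 + h * s) * expectation (\<lambda>\<omega>. min (real (X \<omega>)) T) + exp (h * T) * tail s"
  proof -
    have "expectation (\<lambda>\<omega>. 1 + h * (1 + h * s) * min (real (X \<omega>)) T)
        = 1 + h * (1 + h * s) * expectation (\<lambda>\<omega>. min (real (X \<omega>)) T)"
      using int_min by (simp add: prob_space)
    moreover have "expectation (\<lambda>\<omega>. exp (h * T) * indicator {\<omega>\<in>space M. real (X \<omega>) > s} \<omega>)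
        = exp (h * T) * tail s"
      by (simp add: tail_def)
    ultimately show ?thesis by simp
  qed
  also have "\<dots> \<le> 1 + h * (1 + h * s) * \<alpha> + exp (h * T) * tail s"
  proof -
    have "expectation (\<lambda>\<omega>. min (real (X \<omega>)) T) \<le> \<alpha>"
      unfolding \<alpha>_def by (rule integral_mono[OF int_min integrable_X]) auto
    then show ?thesis using h s by (intro add_mono mult_left_mono) auto
  qed
  also have "\<dots> \<le> exp (h * \<alpha> * (1 + h * s) + exp (h * T) * tail s)"
    using exp_ge_add_one_self[of "h * \<alpha> * (1 + h * s) + exp (h * T) * tail s"]
    by (simp add: algebra_simps)
  finally show ?thesis .
qed

end

section \<open>Sums of independent copies\<close>

locale iid_copies = regularly_varying_tail +
  fixes Y :: "nat \<Rightarrow> 'a \<Rightarrow> nat"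
  assumes Y_measurable[measurable]: "\<And>i. Y i \<in> measurable M (count_space UNIV)"
    and Y_indep: "indep_vars (\<lambda>_. count_space UNIV) Y UNIV"
    and distr_Y: "\<And>i. distr M (count_space UNIV) (Y i) = distr M (count_space UNIV) X"
begin

definition sum_tail :: "nat \<Rightarrow> real \<Rightarrow> real" where
  "sum_tail k x = prob {\<omega>\<in>space M. real (\<Sum>i<k. Y i \<omega>) > x}"

lemma sum_tail_nonneg: "0 \<le> sum_tail k x"
  by (simp add: sum_tail_def)

lemma sum_tail_le_1: "sum_tail k x \<le> 1"
  by (simp add: sum_tail_def)

lemma prob_Y_eq_prob_X: "prob {\<omega>\<in>space M. P (Y i \<omega>)} = prob {\<omega>\<in>space M. P (X \<omega>)}"
proof -
  have "prob {\<omega>\<in>space M. P (Y i \<omega>)} = measure (distr M (count_space UNIV) (Y i)) {n. P n}"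
    by (subst measure_distr) (auto intro!: arg_cong[where f = prob])
  also have "\<dots> = measure (distr M (count_space UNIV) X) {n. P n}"
    by (simp add: distr_Y)
  also have "\<dots> = prob {\<omega>\<in>space M. P (X \<omega>)}"
    by (subst measure_distr) (auto intro!: arg_cong[where f = prob])
  finally show ?thesis .
qed

lemma prob_Y_gt: "prob {\<omega>\<in>space M. real (Y i \<omega>) > y} = tail y"
  unfolding tail_def by (rule prob_Y_eq_prob_X)

lemma distr_Y_borel:
  fixes f :: "nat \<Rightarrow> real"
  shows "distr M borel (\<lambda>\<omega>. f (Y i \<omega>)) = distr M borel (\<lambda>\<omega>. f (X \<omega>))"
proof -
  have "distr M borel (\<lambda>\<omega>. f (Y i \<omega>)) = distr (distr M (count_space UNIV) (Y i)) borel f"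
    by (subst distr_distr) (auto simp: comp_def)
  also have "\<dots> = distr (distr M (count_space UNIV) X) borel f"
    by (simp add: distr_Y)
  also have "\<dots> = distr M borel (\<lambda>\<omega>. f (X \<omega>))"
    by (subst distr_distr) (auto simp: comp_def)
  finally show ?thesis .
qed

lemma expectation_Y_eq_X:
  fixes f :: "nat \<Rightarrow> real"
  shows "expectation (\<lambda>\<omega>. f (Y i \<omega>)) = expectation (\<lambda>\<omega>. f (X \<omega>))"
proof -
  have "expectation (\<lambda>\<omega>. f (Y i \<omega>)) = integral\<^sup>L (distr M (count_space UNIV) (Y i)) f"
    by (rule integral_distr[symmetric]) auto
  also have "\<dots> = integral\<^sup>L (distr M (count_space UNIV) X) f"
    by (simp add: distr_Y)
  also have "\<dots> = expectation (\<lambda>\<omega>. f (X \<omega>))"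
    by (rule integral_distr) auto
  finally show ?thesis .
qed

lemma prob_exists_Y_gt_le: "prob {\<omega>\<in>space M. \<exists>i<k. real (Y i \<omega>) > y} \<le> real k * tail y"
proof -
  have "{\<omega>\<in>space M. \<exists>i<k. real (Y i \<omega>) > y} = (\<Union>i<k. {\<omega>\<in>space M. real (Y i \<omega>) > y})"
    by auto
  then have "prob {\<omega>\<in>space M. \<exists>i<k. real (Y i \<omega>) > y} \<le> (\<Sum>i<k. prob {\<omega>\<in>space M. real (Y i \<omega>) > y})"
    using measure_UNION_le[of "{..<k}" "\<lambda>i. {\<omega>\<in>space M. real (Y i \<omega>) > y}" M] by simp
  then show ?thesis by (simp add: prob_Y_gt)
qed

lemma prob_two_Y_gt:
  assumes "i \<noteq> j"
  shows "prob {\<omega>\<in>space M. real (Y i \<omega>) > y \<and> real (Y j \<omega>) > y} = (tail y)\<^sup>2"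
proof -
  have "prob (\<Inter>l\<in>{i, j}. Y l -` {n. real n > y} \<inter> space M)
      = (\<Prod>l\<in>{i, j}. prob (Y l -` {n. real n > y} \<inter> space M))"
    by (rule indep_varsD[OF Y_indep]) auto
  moreover have "(\<Inter>l\<in>{i, j}. Y l -` {n. real n > y} \<inter> space M)
      = {\<omega>\<in>space M. real (Y i \<omega>) > y \<and> real (Y j \<omega>) > y}"
    by auto
  moreover have "Y l -` {n. real n > y} \<inter> space M = {\<omega>\<in>space M. real (Y l \<omega>) > y}" for l
    by auto
  ultimately show ?thesis using assms by (simp add: prob_Y_gt power2_eq_square)
qed

lemma prob_exists_two_Y_gt_le:
  "prob {\<omega>\<in>space M. \<exists>i j. i < j \<and> j < k \<and> real (Y i \<omega>) > y \<and> real (Y j \<omega>) > y}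
    \<le> (real k)\<^sup>2 * (tail y)\<^sup>2"
proof -
  define P where "P = {(i, j). i < j \<and> j < k}"
  have P: "P \<subseteq> {..<k} \<times> {..<k}" by (auto simp: P_def)
  then have "finite P" by (rule finite_subset) auto
  have "card P \<le> card ({..<k} \<times> {..<k})" using P by (intro card_mono) auto
  then have card_P: "real (card P) \<le> (real k)\<^sup>2"
    by (simp add: card_cartesian_product power2_eq_square flip: of_nat_mult)
  have "{\<omega>\<in>space M. \<exists>i j. i < j \<and> j < k \<and> real (Y i \<omega>) > y \<and> real (Y j \<omega>) > y}
      = (\<Union>(i, j)\<in>P. {\<omega>\<in>space M. real (Y i \<omega>) > y \<and> real (Y j \<omega>) > y})"
    by (auto simp: P_def)
  then have "prob {\<omega>\<in>space M. \<exists>i j. i < j \<and> j < k \<and> real (Y i \<omega>) > y \<and> real (Y j \<omega>) > y}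
      \<le> (\<Sum>(i, j)\<in>P. prob {\<omega>\<in>space M. real (Y i \<omega>) > y \<and> real (Y j \<omega>) > y})"
    using measure_UNION_le[OF \<open>finite P\<close>, of "\<lambda>(i, j). {\<omega>\<in>space M. real (Y i \<omega>) > y \<and> real (Y j \<omega>) > y}" M]
    by (simp add: case_prod_unfold)
  also have "\<dots> = real (card P) * (tail y)\<^sup>2"
    by (simp add: P_def prob_two_Y_gt case_prod_unfold)
  also have "\<dots> \<le> (real k)\<^sup>2 * (tail y)\<^sup>2"
    using card_P by (intro mult_right_mono) auto
  finally show ?thesis .
qed

text \<open>The sum exceeds \<open>x\<close> as soon as one summand does.\<close>
lemma sum_tail_ge_quadratic: "real k * tail x - (real k)\<^sup>2 * (tail x)\<^sup>2 \<le> sum_tail k x"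
proof -
  have "prob (\<Inter>i<k. Y i -` {n. real n \<le> x} \<inter> space M)
      = (\<Prod>i<k. prob (Y i -` {n. real n \<le> x} \<inter> space M))" if "k > 0"
    by (rule indep_varsD[OF Y_indep]) (use that in auto)
  moreover have "prob (Y i -` {n. real n \<le> x} \<inter> space M) = 1 - tail x" for i
  proof -
    have "Y i -` {n. real n \<le> x} \<inter> space M = space M - {\<omega>\<in>space M. real (Y i \<omega>) > x}"
      by auto
    then show ?thesis by (simp add: prob_compl prob_Y_gt)
  qed
  moreover have "(\<Inter>i<k. Y i -` {n. real n \<le> x} \<inter> space M) = {\<omega>\<in>space M. \<forall>i<k. real (Y i \<omega>) \<le> x}"
    if "k > 0" using that by auto
  ultimately have all: "prob {\<omega>\<in>space M. \<forall>i<k. real (Y i \<omega>) \<le> x} = (1 - tail x) ^ k"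
    by (cases "k = 0") (simp_all add: prob_space)
  have "{\<omega>\<in>space M. \<exists>i<k. real (Y i \<omega>) > x} = space M - {\<omega>\<in>space M. \<forall>i<k. real (Y i \<omega>) \<le> x}"
    by auto
  then have "1 - (1 - tail x) ^ k = prob {\<omega>\<in>space M. \<exists>i<k. real (Y i \<omega>) > x}"
    using all by (simp add: prob_compl)
  also have "\<dots> \<le> sum_tail k x"
    unfolding sum_tail_def
  proof (intro finite_measure_mono subsetI)
    fix \<omega> assume "\<omega> \<in> {\<omega>\<in>space M. \<exists>i<k. real (Y i \<omega>) > x}"
    then obtain i where "\<omega> \<in> space M" "i < k" "real (Y i \<omega>) > x" by auto
    moreover have "Y i \<omega> \<le> (\<Sum>i<k. Y i \<omega>)" using \<open>i < k\<close> by (intro member_le_sum) auto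
    ultimately have "x < real (\<Sum>i<k. Y i \<omega>)" by (meson of_nat_le_iff less_le_trans)
    then show "\<omega> \<in> {\<omega>\<in>space M. real (\<Sum>i<k. Y i \<omega>) > x}" using \<open>\<omega> \<in> space M\<close> by simp
  qed simp
  finally show ?thesis
    using one_minus_power_le_quadratic[of "tail x" k] tail_nonneg tail_le_1 by (simp add: power_mult_distrib)
qed

lemma truncated_sum_Chernoff:
  assumes h: "h > 0" and s: "0 < s" "s < T" and hs: "h * s \<le> 1"
  shows "prob {\<omega>\<in>space M. z \<le> (\<Sum>i<k. min (real (Y i \<omega>)) T)}
     \<le> exp (- h * z + real k * (h * \<alpha> * (1 + h * s) + exp (h * T) * tail s))"
proof -
  define V where "V \<omega> = (\<Prod>i<k. exp (h * min (real (Y i \<omega>)) T))" for \<omega>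
  have int: "integrable M (\<lambda>\<omega>. exp (h * min (real (Y i \<omega>)) T))" for i
    using h by (intro integrable_const_bound[where B = "exp (h * T)"]) auto
  have indep: "indep_vars (\<lambda>_. borel) (\<lambda>i \<omega>. exp (h * min (real (Y i \<omega>)) T)) {..<k}"
    by (rule indep_vars_compose2[OF indep_vars_subset[OF Y_indep]]) auto
  have "expectation V = (\<Prod>i<k. expectation (\<lambda>\<omega>. exp (h * min (real (Y i \<omega>)) T)))"
    unfolding V_def by (rule indep_vars_lebesgue_integral[OF _ indep int]) auto
  also have "\<dots> = expectation (\<lambda>\<omega>. exp (h * min (real (X \<omega>)) T)) ^ k"
    using expectation_Y_eq_X[of "\<lambda>n. exp (h * min (real n) T)"] by simp
  finally have EV: "expectation V = expectation (\<lambda>\<omega>. exp (h * min (real (X \<omega>)) T)) ^ k" .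
  have int_V: "integrable M V"
    unfolding V_def by (rule indep_vars_integrable[OF _ indep int]) auto
  have "prob {\<omega>\<in>space M. z \<le> (\<Sum>i<k. min (real (Y i \<omega>)) T)} \<le> prob {\<omega>\<in>space M. exp (h * z) \<le> V \<omega>}"
    using h by (intro finite_measure_mono) (auto simp: V_def exp_sum[symmetric] sum_distrib_left[symmetric])
  also have "\<dots> \<le> expectation V / exp (h * z)"
    by (rule integral_Markov_inequality_measure[OF int_V, where A = "space M"])
      (auto simp: V_def intro!: prod_nonneg)
  also have "\<dots> \<le> exp (h * \<alpha> * (1 + h * s) + exp (h * T) * tail s) ^ k / exp (h * z)"
    unfolding EV using truncated_mgf_le[OF h s hs]
    by (intro divide_right_mono power_mono) (auto intro: integral_nonneg_AE)
  also have "\<dots> = exp (- h * z + real k * (h * \<alpha> * (1 + h * s) + exp (h * T) * tail s))"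
    by (simp add: exp_of_nat_mult[symmetric] exp_diff[symmetric] algebra_simps)
  finally show ?thesis .
qed

text \<open>The Chernoff bound at the scale \<open>h = r ln x / x\<close> with truncation level \<open>s = x / (ln x)\<^sup>2\<close>
  for the exceedance event and \<open>\<theta> x\<close> for the summands.\<close>
lemma truncated_sum_Chernoff_log_scale:
  assumes r: "0 < r" and \<theta>: "0 < \<theta>"
    and x: "1 < x" "r \<le> ln x" "x / (ln x)\<^sup>2 < \<theta> * x"
    and jump: "x powr (1 + r * \<theta>) * tail (x / (ln x)\<^sup>2) \<le> \<alpha>"
    and k: "real k * \<alpha> \<le> x" and z: "real k * \<alpha> + \<gamma> * x \<le> z"
  shows "prob {\<omega>\<in>space M. z \<le> (\<Sum>i<k. min (real (Y i \<omega>)) (\<theta> * x))}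
    \<le> exp (r\<^sup>2 + 1) * x powr (- (r * \<gamma>))"
proof -
  define h where "h = r * ln x / x"
  define s where "s = x / (ln x)\<^sup>2"
  have ln: "0 < ln x" using x by simp
  have h: "0 < h" and s: "0 < s" using r x ln by (auto simp: h_def s_def)
  have hs: "h * s = r / ln x" using x ln by (simp add: h_def s_def power2_eq_square field_simps)
  then have "h * s \<le> 1" using x ln by simp
  then have Chernoff: "prob {\<omega>\<in>space M. z \<le> (\<Sum>i<k. min (real (Y i \<omega>)) (\<theta> * x))}
      \<le> exp (- h * z + real k * (h * \<alpha> * (1 + h * s) + exp (h * (\<theta> * x)) * tail s))"
    using x by (intro truncated_sum_Chernoff h s) (auto simp: s_def)
  have "- h * z \<le> - h * (real k * \<alpha>) - r * \<gamma> * ln x"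
    using mult_left_mono[OF z, of h] h x by (simp add: h_def algebra_simps)
  moreover have "real k * (h * \<alpha> * (1 + h * s)) \<le> h * (real k * \<alpha>) + r\<^sup>2"
  proof -
    have "real k * (h * \<alpha> * (1 + h * s)) = h * (real k * \<alpha>) + real k * \<alpha> * (h * (h * s))"
      by (simp add: algebra_simps)
    also have "real k * \<alpha> * (h * (h * s)) \<le> x * (h * (h * s))"
      using k h s by (intro mult_right_mono) auto
    also have "x * (h * (h * s)) = (x * h) * (h * s)" by (simp add: mult_ac)
    also have "\<dots> = (r * ln x) * (r / ln x)"
      using x by (simp only: hs) (simp add: h_def)
    also have "\<dots> = r\<^sup>2" using ln by (simp add: power2_eq_square)
    finally show ?thesis by simp
  qed
  moreover have "real k * (exp (h * (\<theta> * x)) * tail s) \<le> 1"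
  proof -
    have "exp (h * (\<theta> * x)) = x powr (r * \<theta>)"
      using x by (simp add: h_def powr_def)
    then have "real k * (exp (h * (\<theta> * x)) * tail s) = real k * (x powr (r * \<theta>) * tail s)"
      by simp
    also have "\<dots> \<le> x / \<alpha> * (x powr (r * \<theta>) * tail s)"
      using k alpha_pos by (intro mult_right_mono) (auto simp: le_divide_eq tail_nonneg)
    also have "\<dots> = x powr (1 + r * \<theta>) * tail s / \<alpha>"
      using x by (simp add: powr_add)
    also have "\<dots> \<le> 1" using jump alpha_pos by (simp add: s_def)
    finally show ?thesis .
  qed
  ultimately have "- h * z + real k * (h * \<alpha> * (1 + h * s) + exp (h * (\<theta> * x)) * tail s)
      \<le> r\<^sup>2 + 1 - r * \<gamma> * ln x"
    unfolding distrib_left by linarith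
  then have "exp (- h * z + real k * (h * \<alpha> * (1 + h * s) + exp (h * (\<theta> * x)) * tail s))
      \<le> exp (r\<^sup>2 + 1 - r * \<gamma> * ln x)"
    by (simp only: exp_le_cancel_iff)
  also have "\<dots> = exp (r\<^sup>2 + 1) * x powr (- (r * \<gamma>))"
    using x by (simp add: powr_def exp_diff exp_minus divide_inverse)
  finally show ?thesis using Chernoff by linarith
qed

lemma truncated_sum_large_deviation:
  assumes "\<gamma> > 0"
  shows "\<exists>\<theta>>0. \<exists>E. (\<forall>x. 0 \<le> E x) \<and> ((\<lambda>x. E x / tail x) \<longlongrightarrow> 0) at_top \<and>
    (\<forall>\<^sub>F x in at_top. \<forall>k z. real k * \<alpha> \<le> x \<longrightarrow> real k * \<alpha> + \<gamma> * x \<le> z \<longrightarrow>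
        prob {\<omega>\<in>space M. z \<le> (\<Sum>i<k. min (real (Y i \<omega>)) (\<theta> * x))} \<le> E x)"
proof -
  define r where "r = (\<kappa> + 2) / \<gamma>"
  define d where "d = (\<kappa> - 1) / 2"
  define \<theta> where "\<theta> = d / r"
  define E where "E x = exp (r\<^sup>2 + 1) * x powr (- (\<kappa> + 2))" for x
  have r: "0 < r" "r * \<gamma> = \<kappa> + 2" using assms kappa_gt_1 by (auto simp: r_def)
  have d: "0 < d" "1 + d < \<kappa>" unfolding d_def using kappa_gt_1 by (auto simp: field_simps)
  have \<theta>: "0 < \<theta>" "r * \<theta> = d" using r d by (auto simp: \<theta>_def)
  have E_small: "((\<lambda>x. E x / tail x) \<longlongrightarrow> 0) at_top"
    using tendsto_mult_right_zero[OF tendsto_powr_div_tail_0[of "\<kappa> + 2"], of "exp (r\<^sup>2 + 1)"]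
    by (simp add: E_def)
  have "\<forall>\<^sub>F x in at_top. 1 < x \<and> r \<le> ln x \<and> x / (ln x)\<^sup>2 < \<theta> * x \<and>
      x powr (1 + r * \<theta>) * tail (x / (ln x)\<^sup>2) \<le> \<alpha>"
  proof (intro eventually_conj)
    show "\<forall>\<^sub>F x in at_top. 1 < (x::real)" "\<forall>\<^sub>F x in at_top. r \<le> ln x" by real_asymp+
    show "\<forall>\<^sub>F x in at_top. x / (ln x)\<^sup>2 < \<theta> * x" using \<theta> by real_asymp
    show "\<forall>\<^sub>F x in at_top. x powr (1 + r * \<theta>) * tail (x / (ln x)\<^sup>2) \<le> \<alpha>"
      using order_tendstoD(2)[OF tendsto_powr_times_tail_log_scale_0[OF d] alpha_pos] \<theta>
      by (auto elim: eventually_mono)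
  qed
  then have "\<forall>\<^sub>F x in at_top. \<forall>k z. real k * \<alpha> \<le> x \<longrightarrow> real k * \<alpha> + \<gamma> * x \<le> z \<longrightarrow>
        prob {\<omega>\<in>space M. z \<le> (\<Sum>i<k. min (real (Y i \<omega>)) (\<theta> * x))} \<le> E x"
  proof eventually_elim
    case (elim x)
    show ?case
    proof (intro allI impI)
      fix k z assume "real k * \<alpha> \<le> x" "real k * \<alpha> + \<gamma> * x \<le> z"
      then show "prob {\<omega>\<in>space M. z \<le> (\<Sum>i<k. min (real (Y i \<omega>)) (\<theta> * x))} \<le> E x"
        using truncated_sum_Chernoff_log_scale[OF r(1) \<theta>(1), of x k \<gamma> z] elim
        by (simp add: E_def r(2))
    qed
  qed
  moreover have "\<forall>x. 0 \<le> E x" by (simp add: E_def)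
  ultimately show ?thesis using \<theta>(1) E_small by blast
qed

lemma prob_truncated_sum_le_Hoeffding:
  assumes "0 < T" "0 < d" "0 < k"
  shows "prob {\<omega>\<in>space M. (\<Sum>i<k. min (real (Y i \<omega>)) T)
      \<le> real k * (expectation (\<lambda>\<omega>. min (real (X \<omega>)) T) - d)} \<le> exp (-2 * real k * d\<^sup>2 / T\<^sup>2)"
proof -
  define \<mu> where "\<mu> = expectation (\<lambda>\<omega>. min (real (X \<omega>)) T)"
  interpret Hoeffding_ineq_iid M "{..<k}" "\<lambda>i \<omega>. min (real (Y i \<omega>)) T"
      "\<lambda>\<omega>. min (real (X \<omega>)) T" 0 T \<mu>
  proof unfold_locales
    show "indep_vars (\<lambda>_. borel) (\<lambda>i \<omega>. min (real (Y i \<omega>)) T) {..<k}"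
      by (rule indep_vars_compose2[OF indep_vars_subset[OF Y_indep]]) auto
    show "distr M borel (\<lambda>\<omega>. min (real (Y i \<omega>)) T) = distr M borel (\<lambda>\<omega>. min (real (X \<omega>)) T)" for i
      by (rule distr_Y_borel)
  qed (use assms in \<open>auto simp: \<mu>_def\<close>)
  have "prob {\<omega>\<in>space M. (\<Sum>i<k. min (real (Y i \<omega>)) T) \<le> real k * \<mu> - real k * d}
      \<le> exp (-2 * (real k * d)\<^sup>2 / (real k * (T - 0)\<^sup>2))"
    using Hoeffding_ineq_le[of "real k * d"] assms by (simp add: lessThan_empty_iff)
  also have "-2 * (real k * d)\<^sup>2 / (real k * (T - 0)\<^sup>2) = -2 * real k * d\<^sup>2 / T\<^sup>2"
    using assms by (simp add: power2_eq_square field_simps)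
  finally show ?thesis by (simp add: \<mu>_def right_diff_distrib)
qed

lemma sum_tail_eventually_ge:
  assumes "\<beta> < \<alpha>" "\<rho> > 0"
  shows "\<exists>K. \<forall>k\<ge>K. \<forall>x. x \<le> real k * \<beta> \<longrightarrow> 1 - \<rho> \<le> sum_tail k x"
proof -
  have "\<forall>\<^sub>F T in sequentially. (\<alpha> + \<beta>) / 2 < expectation (\<lambda>\<omega>. min (real (X \<omega>)) (real T)) \<and> 1 \<le> T"
    using order_tendstoD(1)[OF tendsto_expectation_min_X, of "(\<alpha> + \<beta>) / 2"] assms
      eventually_ge_at_top[of 1]
    by (auto elim: eventually_conj)
  then obtain T where T: "(\<alpha> + \<beta>) / 2 < expectation (\<lambda>\<omega>. min (real (X \<omega>)) (real T))" "1 \<le> T"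
    by (auto simp: eventually_sequentially)
  define d where "d = expectation (\<lambda>\<omega>. min (real (X \<omega>)) (real T)) - \<beta>"
  have d: "d > 0" using T assms by (simp add: d_def)
  have "((\<lambda>k. exp (-2 * real k * d\<^sup>2 / (real T)\<^sup>2)) \<longlongrightarrow> 0) sequentially"
    using d T by real_asymp
  then have "\<forall>\<^sub>F k in sequentially. exp (-2 * real k * d\<^sup>2 / (real T)\<^sup>2) < \<rho>"
    using assms by (intro order_tendstoD(2)) auto
  then have "\<forall>\<^sub>F k in sequentially. exp (-2 * real k * d\<^sup>2 / (real T)\<^sup>2) < \<rho> \<and> 1 \<le> k"
    using eventually_ge_at_top[of 1] by (rule eventually_conj)
  then obtain K where K: "\<And>k. K \<le> k \<Longrightarrow> exp (-2 * real k * d\<^sup>2 / (real T)\<^sup>2) < \<rho> \<and> 1 \<le> k"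
    by (auto simp: eventually_sequentially)
  show ?thesis
  proof (intro exI[of _ K] allI impI)
    fix k x assume k: "K \<le> k" and x: "x \<le> real k * \<beta>"
    let ?S = "\<lambda>\<omega>. \<Sum>i<k. min (real (Y i \<omega>)) (real T)"
    have "prob {\<omega>\<in>space M. ?S \<omega> \<le> real k * \<beta>} < \<rho>"
      using prob_truncated_sum_le_Hoeffding[of "real T" d k] K[OF k] d T by (simp add: d_def)
    moreover have "{\<omega>\<in>space M. real k * \<beta> < ?S \<omega>} = space M - {\<omega>\<in>space M. ?S \<omega> \<le> real k * \<beta>}"
      by auto
    ultimately have "1 - \<rho> < prob {\<omega>\<in>space M. real k * \<beta> < ?S \<omega>}"
      by (simp add: prob_compl)
    also have "\<dots> \<le> sum_tail k x"
      unfolding sum_tail_def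
    proof (intro finite_measure_mono subsetI)
      fix \<omega> assume "\<omega> \<in> {\<omega>\<in>space M. real k * \<beta> < ?S \<omega>}"
      moreover have "?S \<omega> \<le> (\<Sum>i<k. real (Y i \<omega>))" by (intro sum_mono) auto
      ultimately show "\<omega> \<in> {\<omega>\<in>space M. real (\<Sum>i<k. Y i \<omega>) > x}" using x by auto
    qed simp
    finally show "1 - \<rho> \<le> sum_tail k x" by simp
  qed
qed

text \<open>If the sum exceeds \<open>x\<close> but no summand exceeds \<open>(1 - \<eta>) x\<close> and at most one exceeds
  \<open>\<theta> x\<close>, then the sum truncated at \<open>\<theta> x\<close> is still at least \<open>\<eta> x\<close>.\<close>
lemma sum_tail_le_one_big_jump_or_deviation:
  assumes "0 \<le> x" "0 < \<eta>" "\<eta> < 1" "0 < \<theta>"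
  shows "sum_tail k x \<le> real k * tail ((1 - \<eta>) * x) + (real k)\<^sup>2 * (tail (\<theta> * x))\<^sup>2
    + prob {\<omega>\<in>space M. \<eta> * x \<le> (\<Sum>i<k. min (real (Y i \<omega>)) (\<theta> * x))}"
proof -
  define A where "A = {\<omega>\<in>space M. \<exists>i<k. real (Y i \<omega>) > (1 - \<eta>) * x}"
  define B where "B = {\<omega>\<in>space M. \<exists>i j. i < j \<and> j < k \<and> real (Y i \<omega>) > \<theta> * x \<and> real (Y j \<omega>) > \<theta> * x}"
  define C where "C = {\<omega>\<in>space M. \<eta> * x \<le> (\<Sum>i<k. min (real (Y i \<omega>)) (\<theta> * x))}"
  have events: "A \<in> events" "B \<in> events" "C \<in> events"
    unfolding A_def B_def C_def by measurable
  have "{\<omega>\<in>space M. real (\<Sum>i<k. Y i \<omega>) > x} \<subseteq> A \<union> B \<union> C"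
  proof
    fix \<omega> assume \<omega>: "\<omega> \<in> {\<omega>\<in>space M. real (\<Sum>i<k. Y i \<omega>) > x}"
    show "\<omega> \<in> A \<union> B \<union> C"
    proof (rule ccontr)
      assume \<omega>': "\<omega> \<notin> A \<union> B \<union> C"
      have "real (Y i \<omega>) \<le> (1 - \<eta>) * x" if "i < k" for i
      proof (rule ccontr)
        assume "\<not> ?thesis"
        then have "\<omega> \<in> A" using that \<omega> by (auto simp: A_def not_le)
        then show False using \<omega>' by blast
      qed
      moreover have "real (Y i \<omega>) \<le> \<theta> * x \<or> real (Y j \<omega>) \<le> \<theta> * x" if "i < j" "j < k" for i j
      proof (rule ccontr)
        assume "\<not> ?thesis"
        then have "\<omega> \<in> B" using that \<omega> by (auto simp: B_def not_le)
        then show False using \<omega>' by blast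
      qed
      ultimately have "\<eta> * x \<le> (\<Sum>i<k. min (real (Y i \<omega>)) (\<theta> * x))"
        using \<omega> assms by (intro sum_min_ge_of_one_large) auto
      then show False using \<omega>' \<omega> by (simp add: C_def)
    qed
  qed
  then have "sum_tail k x \<le> prob (A \<union> B \<union> C)"
    unfolding sum_tail_def using events by (intro finite_measure_mono) auto
  also have "\<dots> \<le> prob A + prob B + prob C"
    using measure_Un_le[of "A \<union> B" M C] measure_Un_le[of A M B] events by auto
  also have "prob A \<le> real k * tail ((1 - \<eta>) * x)"
    unfolding A_def by (rule prob_exists_Y_gt_le)
  also have "prob B \<le> (real k)\<^sup>2 * (tail (\<theta> * x))\<^sup>2"
    unfolding B_def by (rule prob_exists_two_Y_gt_le)
  finally show ?thesis by (simp add: C_def)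
qed

lemma sum_tail_le_jump_or_deviation:
  "sum_tail k x \<le> real k * tail (\<theta> * x) + prob {\<omega>\<in>space M. x \<le> (\<Sum>i<k. min (real (Y i \<omega>)) (\<theta> * x))}"
proof -
  define A where "A = {\<omega>\<in>space M. \<exists>i<k. real (Y i \<omega>) > \<theta> * x}"
  define C where "C = {\<omega>\<in>space M. x \<le> (\<Sum>i<k. min (real (Y i \<omega>)) (\<theta> * x))}"
  have events: "A \<in> events" "C \<in> events"
    unfolding A_def C_def by measurable
  have "{\<omega>\<in>space M. real (\<Sum>i<k. Y i \<omega>) > x} \<subseteq> A \<union> C"
  proof
    fix \<omega> assume \<omega>: "\<omega> \<in> {\<omega>\<in>space M. real (\<Sum>i<k. Y i \<omega>) > x}"
    show "\<omega> \<in> A \<union> C"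
    proof (rule ccontr)
      assume "\<omega> \<notin> A \<union> C"
      then have "(\<Sum>i<k. min (real (Y i \<omega>)) (\<theta> * x)) = (\<Sum>i<k. real (Y i \<omega>))"
        using \<omega> by (intro sum.cong) (auto simp: A_def)
      then show False using \<open>\<omega> \<notin> A \<union> C\<close> \<omega> by (simp add: C_def)
    qed
  qed
  then have "sum_tail k x \<le> prob (A \<union> C)"
    unfolding sum_tail_def using events by (intro finite_measure_mono) auto
  also have "\<dots> \<le> prob A + prob C"
    using measure_Un_le[of A M C] events by auto
  also have "prob A \<le> real k * tail (\<theta> * x)"
    unfolding A_def by (rule prob_exists_Y_gt_le)
  finally show ?thesis by (simp add: C_def)
qed

lemma sum_tail_le_one_big_jump:
  assumes \<eta>: "0 < \<eta>" "\<eta> < 1"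
  shows "\<exists>\<theta>>0. \<exists>E. (\<forall>x. 0 \<le> E x) \<and> ((\<lambda>x. E x / tail x) \<longlongrightarrow> 0) at_top \<and>
    (\<forall>\<^sub>F x in at_top. \<forall>k. real k * \<alpha> \<le> \<eta> * x / 2 \<longrightarrow>
        sum_tail k x \<le> real k * tail ((1 - \<eta>) * x) + (real k)\<^sup>2 * (tail (\<theta> * x))\<^sup>2 + E x)"
proof -
  obtain \<theta> E where \<theta>: "\<theta> > 0" and E: "\<forall>x. 0 \<le> E x" "((\<lambda>x. E x / tail x) \<longlongrightarrow> 0) at_top"
    and dev: "\<forall>\<^sub>F x in at_top. \<forall>k z. real k * \<alpha> \<le> x \<longrightarrow> real k * \<alpha> + \<eta> / 2 * x \<le> z \<longrightarrow>
        prob {\<omega>\<in>space M. z \<le> (\<Sum>i<k. min (real (Y i \<omega>)) (\<theta> * x))} \<le> E x"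
    using truncated_sum_large_deviation[of "\<eta> / 2"] \<eta> by auto
  have "\<forall>\<^sub>F x in at_top. \<forall>k. real k * \<alpha> \<le> \<eta> * x / 2 \<longrightarrow>
      sum_tail k x \<le> real k * tail ((1 - \<eta>) * x) + (real k)\<^sup>2 * (tail (\<theta> * x))\<^sup>2 + E x"
    using dev eventually_ge_at_top[of 0]
  proof eventually_elim
    case (elim x)
    show ?case
    proof (intro allI impI)
      fix k assume k: "real k * \<alpha> \<le> \<eta> * x / 2"
      have "\<eta> * x \<le> x" using \<eta> elim by (intro mult_left_le_one_le) auto
      moreover have "0 \<le> real k * \<alpha>" using alpha_pos by simp
      ultimately have "real k * \<alpha> \<le> x" "real k * \<alpha> + \<eta> / 2 * x \<le> \<eta> * x" using k by auto
      then have "prob {\<omega>\<in>space M. \<eta> * x \<le> (\<Sum>i<k. min (real (Y i \<omega>)) (\<theta> * x))} \<le> E x"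
        using elim by blast
      then show "sum_tail k x \<le> real k * tail ((1 - \<eta>) * x) + (real k)\<^sup>2 * (tail (\<theta> * x))\<^sup>2 + E x"
        using sum_tail_le_one_big_jump_or_deviation[of x \<eta> \<theta> k] elim \<eta> \<theta> by linarith
    qed
  qed
  then show ?thesis using \<theta> E by blast
qed

lemma sum_tail_le_moderate:
  assumes \<epsilon>: "0 < \<epsilon>" "\<epsilon> < 1"
  shows "\<exists>\<theta>>0. \<exists>E. (\<forall>x. 0 \<le> E x) \<and> ((\<lambda>x. E x / tail x) \<longlongrightarrow> 0) at_top \<and>
    (\<forall>\<^sub>F x in at_top. \<forall>k. real k * \<alpha> \<le> (1 - \<epsilon>) * x \<longrightarrow> sum_tail k x \<le> real k * tail (\<theta> * x) + E x)"
proof -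
  obtain \<theta> E where \<theta>: "\<theta> > 0" and E: "\<forall>x. 0 \<le> E x" "((\<lambda>x. E x / tail x) \<longlongrightarrow> 0) at_top"
    and dev: "\<forall>\<^sub>F x in at_top. \<forall>k z. real k * \<alpha> \<le> x \<longrightarrow> real k * \<alpha> + \<epsilon> * x \<le> z \<longrightarrow>
        prob {\<omega>\<in>space M. z \<le> (\<Sum>i<k. min (real (Y i \<omega>)) (\<theta> * x))} \<le> E x"
    using truncated_sum_large_deviation[of \<epsilon>] \<epsilon> by auto
  have "\<forall>\<^sub>F x in at_top. \<forall>k. real k * \<alpha> \<le> (1 - \<epsilon>) * x \<longrightarrow> sum_tail k x \<le> real k * tail (\<theta> * x) + E x"
    using dev eventually_ge_at_top[of 0]
  proof eventually_elim
    case (elim x)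
    show ?case
    proof (intro allI impI)
      fix k assume k: "real k * \<alpha> \<le> (1 - \<epsilon>) * x"
      have "0 \<le> \<epsilon> * x" using \<epsilon> elim by simp
      then have "real k * \<alpha> \<le> x" "real k * \<alpha> + \<epsilon> * x \<le> x"
        using k by (simp_all add: algebra_simps)
      then have "prob {\<omega>\<in>space M. x \<le> (\<Sum>i<k. min (real (Y i \<omega>)) (\<theta> * x))} \<le> E x"
        using elim by blast
      then show "sum_tail k x \<le> real k * tail (\<theta> * x) + E x"
        using sum_tail_le_jump_or_deviation[of k x \<theta>] by linarith
    qed
  qed
  then show ?thesis using \<theta> E by blast
qed

end

section \<open>Random sums\<close>

text \<open>\<open>p k\<close> plays the role of \<open>P(N = k)\<close> for the number \<open>N\<close> of summands; then
  \<open>count_tail y = P(N > y)\<close> and \<open>count_mean_tail y = E[N; N > y]\<close>.\<close>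
locale random_index = regularly_varying_tail +
  fixes p :: "nat \<Rightarrow> real" and m :: real
  assumes p_nonneg: "\<And>k. 0 \<le> p k" and p_sums: "p sums 1"
    and p_mean: "(\<lambda>k. real k * p k) sums m"
begin

definition count_tail :: "real \<Rightarrow> real" where
  "count_tail y = (\<Sum>k. if real k > y then p k else 0)"

definition count_mean_tail :: "real \<Rightarrow> real" where
  "count_mean_tail y = (\<Sum>k. if real k > y then real k * p k else 0)"

lemma count_tail_sums: "(\<lambda>k. if real k > y then p k else 0) sums count_tail y"
proof -
  have "summable (\<lambda>k. if real k > y then p k else 0)"
    by (rule summable_comparison_test[OF _ sums_summable[OF p_sums]]) (use p_nonneg in auto)
  then show ?thesis unfolding count_tail_def by (rule summable_sums)
qed

lemma count_mean_tail_sums: "(\<lambda>k. if real k > y then real k * p k else 0) sums count_mean_tail y"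
proof -
  have "summable (\<lambda>k. if real k > y then real k * p k else 0)"
    by (rule summable_comparison_test[OF _ sums_summable[OF p_mean]]) (use p_nonneg in auto)
  then show ?thesis unfolding count_mean_tail_def by (rule summable_sums)
qed

lemma count_mean_below_sums:
  "(\<lambda>k. if real k \<le> y then real k * p k else 0) sums (m - count_mean_tail y)"
proof -
  have "(\<lambda>k. real k * p k - (if real k > y then real k * p k else 0)) sums (m - count_mean_tail y)"
    by (rule sums_diff[OF p_mean count_mean_tail_sums])
  moreover have "(\<lambda>k. real k * p k - (if real k > y then real k * p k else 0))
      = (\<lambda>k. if real k \<le> y then real k * p k else 0)"
    by (auto simp: fun_eq_iff)
  ultimately show ?thesis by simp
qed

lemma tendsto_count_mean_tail_0: "(count_mean_tail \<longlongrightarrow> 0) at_top"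
proof (rule order_tendstoI)
  fix a :: real assume "a < 0"
  then show "\<forall>\<^sub>F y in at_top. a < count_mean_tail y"
    using sums_le[OF _ sums_zero count_mean_tail_sums] p_nonneg
    by (intro always_eventually) (simp add: less_le_trans)
next
  fix e :: real assume "0 < e"
  have "(\<lambda>n. \<Sum>k<n. real k * p k) \<longlonglongrightarrow> m" using p_mean by (simp add: sums_def)
  then have "\<forall>\<^sub>F n in sequentially. m - e < (\<Sum>k<n. real k * p k)"
    using \<open>0 < e\<close> by (intro order_tendstoD(1)) auto
  then obtain N where N: "m - e < (\<Sum>k<N. real k * p k)"
    by (auto simp: eventually_sequentially)
  show "\<forall>\<^sub>F y in at_top. count_mean_tail y < e"
    using eventually_ge_at_top[of "real N"]
  proof eventually_elim
    case (elim y)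
    have "(\<Sum>k<N. real k * p k) = (\<Sum>k<N. if real k \<le> y then real k * p k else 0)"
      using elim by (intro sum.cong) auto
    also have "\<dots> \<le> m - count_mean_tail y"
      unfolding sums_unique[OF count_mean_below_sums]
      by (rule sum_le_suminf[OF sums_summable[OF count_mean_below_sums]]) (use p_nonneg in auto)
    finally show ?case using N by simp
  qed
qed

lemma summable_p_times_bounded:
  assumes "\<And>k. 0 \<le> f k" "\<And>k. f k \<le> 1"
  shows "summable (\<lambda>k. p k * f k)"
  by (rule summable_comparison_test[OF _ sums_summable[OF p_sums]])
    (use assms p_nonneg in \<open>auto intro!: mult_right_le_one_le simp: abs_mult\<close>)

lemma weighted_sum_le_split:
  assumes f: "\<And>k. 0 \<le> f k" "\<And>k. f k \<le> 1"
    and nonneg: "0 \<le> u" "0 \<le> a" "0 \<le> b" "0 \<le> e" "0 \<le> a'" "0 \<le> e'"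
    and small: "\<And>k. real k \<le> u \<Longrightarrow> f k \<le> real k * a + (real k)\<^sup>2 * b + e"
    and moderate: "\<And>k. u < real k \<Longrightarrow> real k \<le> v \<Longrightarrow> f k \<le> real k * a' + e'"
  shows "(\<Sum>k. p k * f k) \<le> m * a + m * u * b + e + count_mean_tail u * a' + e' + count_tail v"
proof -
  define g where "g k = real k * a + real k * u * b + e + (if real k > u then real k * a' else 0)
    + e' + (if real k > v then 1 else 0)" for k
  have "(\<lambda>k. p k * g k) = (\<lambda>k. (real k * p k) * a + (real k * p k) * (u * b) + p k * e
      + (if real k > u then real k * p k else 0) * a' + p k * e' + (if real k > v then p k else 0))"
    by (auto simp: fun_eq_iff g_def algebra_simps)
  also have "\<dots> sums (m * a + m * (u * b) + 1 * e + count_mean_tail u * a' + 1 * e' + count_tail v)"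
    by (intro sums_add sums_mult2 p_mean p_sums count_mean_tail_sums count_tail_sums)
  finally have g_sums: "(\<lambda>k. p k * g k)
      sums (m * a + m * u * b + e + count_mean_tail u * a' + e' + count_tail v)"
    by (simp add: mult.assoc)
  have "f k \<le> g k" for k
  proof -
    have nn: "0 \<le> real k * a" "0 \<le> real k * u * b" "0 \<le> real k * a'" using nonneg by auto
    consider "real k \<le> u" | "u < real k" "real k \<le> v" | "u < real k" "v < real k" by linarith
    then show ?thesis
    proof cases
      case 1
      then have "(real k)\<^sup>2 * b \<le> real k * u * b"
        using nonneg by (simp add: power2_eq_square mult_right_mono mult_left_mono)
      moreover have "real k * a + real k * u * b + e \<le> g k"
        using 1 nonneg by (auto simp: g_def)
      ultimately show ?thesis using small[OF 1] by linarith
    next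
      case 2
      then have "g k = real k * a + real k * u * b + e + real k * a' + e'" by (simp add: g_def)
      then show ?thesis using moderate[OF 2] nn nonneg by linarith
    next
      case 3
      then have "g k = real k * a + real k * u * b + e + real k * a' + e' + 1" by (simp add: g_def)
      then show ?thesis using f(2)[of k] nn nonneg by linarith
    qed
  qed
  then have "(\<Sum>k. p k * f k) \<le> (\<Sum>k. p k * g k)"
    using p_nonneg
    by (intro suminf_le summable_p_times_bounded[OF f] sums_summable[OF g_sums]) (auto intro: mult_left_mono)
  then show ?thesis using sums_unique[OF g_sums] by simp
qed

lemma weighted_sum_ge_split:
  assumes f: "\<And>k. 0 \<le> f k" "\<And>k. f k \<le> 1"
    and small: "\<And>k. real k \<le> u \<Longrightarrow> real k * a \<le> f k"
    and large: "\<And>k. u < real k \<Longrightarrow> b \<le> f k"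
  shows "(m - count_mean_tail u) * a + count_tail u * b \<le> (\<Sum>k. p k * f k)"
proof -
  define h where "h k = (if real k \<le> u then real k * a else 0) + (if real k > u then b else 0)" for k
  have "(\<lambda>k. p k * h k)
      = (\<lambda>k. (if real k \<le> u then real k * p k else 0) * a + (if real k > u then p k else 0) * b)"
    by (auto simp: fun_eq_iff h_def)
  also have "\<dots> sums ((m - count_mean_tail u) * a + count_tail u * b)"
    by (intro sums_add sums_mult2 count_mean_below_sums count_tail_sums)
  finally have h_sums: "(\<lambda>k. p k * h k) sums ((m - count_mean_tail u) * a + count_tail u * b)" .
  have "h k \<le> f k" for k
    using small[of k] large[of k] by (auto simp: h_def not_less)
  then have "(\<Sum>k. p k * h k) \<le> (\<Sum>k. p k * f k)"
    using p_nonneg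
    by (intro suminf_le summable_p_times_bounded[OF f] sums_summable[OF h_sums]) (auto intro: mult_left_mono)
  then show ?thesis using sums_unique[OF h_sums] by simp
qed

end

text \<open>For \<open>N\<close> independent of the summands, \<open>\<Sum>k. p k * sum_tail k x = P(Y 0 + ... + Y (N - 1) > x)\<close>.\<close>
locale compound_tail = random_index M X \<kappa> L p m + iid_copies M X \<kappa> L Y
  for M :: "'a measure" and X \<kappa> L p m Y +
  fixes c :: real
  assumes count_tail_ratio: "((\<lambda>y. count_tail y / tail y) \<longlongrightarrow> c) at_top"
begin

lemma tendsto_count_tail_rescaled:
  assumes "t > 0"
  shows "((\<lambda>x. count_tail (t * x) / tail x) \<longlongrightarrow> c * t powr (-\<kappa>)) at_top"
proof -
  have "((\<lambda>x. count_tail (t * x) / tail (t * x) * (tail (t * x) / tail x)) \<longlongrightarrow> c * t powr (-\<kappa>)) at_top"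
    using tendsto_rescale_at_top[OF count_tail_ratio assms] tendsto_tail_ratio[OF assms]
    by (rule tendsto_mult)
  moreover have "filterlim (\<lambda>x. t * x) at_top at_top" using assms by real_asymp
  then have "\<forall>\<^sub>F x in at_top. tail (t * x) > 0"
    by (rule eventually_compose_filterlim[OF eventually_tail_pos])
  then have "\<forall>\<^sub>F x in at_top. count_tail (t * x) / tail (t * x) * (tail (t * x) / tail x)
      = count_tail (t * x) / tail x"
    by eventually_elim simp
  ultimately show ?thesis by (rule Lim_transform_eventually)
qed

lemma compound_majorant:
  assumes \<epsilon>: "0 < \<epsilon>" "\<epsilon> < 1"
  shows "\<exists>G. (\<forall>\<^sub>F x in at_top. (\<Sum>k. p k * sum_tail k x) \<le> G x) \<and>
    ((\<lambda>x. G x / tail x) \<longlongrightarrow> m * (1 - \<epsilon>) powr (-\<kappa>) + c * ((1 - \<epsilon>) / \<alpha>) powr (-\<kappa>)) at_top"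
proof -
  obtain \<theta> E where \<theta>: "\<theta> > 0" and E: "\<forall>x. 0 \<le> E x" "((\<lambda>x. E x / tail x) \<longlongrightarrow> 0) at_top"
    and jump: "\<forall>\<^sub>F x in at_top. \<forall>k. real k * \<alpha> \<le> \<epsilon> * x / 2 \<longrightarrow>
        sum_tail k x \<le> real k * tail ((1 - \<epsilon>) * x) + (real k)\<^sup>2 * (tail (\<theta> * x))\<^sup>2 + E x"
    using sum_tail_le_one_big_jump[OF \<epsilon>] by auto
  obtain \<theta>' E' where \<theta>': "\<theta>' > 0" and E': "\<forall>x. 0 \<le> E' x" "((\<lambda>x. E' x / tail x) \<longlongrightarrow> 0) at_top"
    and moderate: "\<forall>\<^sub>F x in at_top. \<forall>k. real k * \<alpha> \<le> (1 - \<epsilon>) * x \<longrightarrow>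
        sum_tail k x \<le> real k * tail (\<theta>' * x) + E' x"
    using sum_tail_le_moderate[OF \<epsilon>] by auto
  define \<delta> where "\<delta> = \<epsilon> / (2 * \<alpha>)"
  define t where "t = (1 - \<epsilon>) / \<alpha>"
  have \<delta>: "\<delta> > 0" and t: "t > 0" using \<epsilon> alpha_pos by (auto simp: \<delta>_def t_def)
  define G where "G x = m * tail ((1 - \<epsilon>) * x) + m * (\<delta> * x) * (tail (\<theta> * x))\<^sup>2 + E x
      + count_mean_tail (\<delta> * x) * tail (\<theta>' * x) + E' x + count_tail (t * x)" for x
  have "\<forall>\<^sub>F x in at_top. (\<Sum>k. p k * sum_tail k x) \<le> G x"
    using jump moderate eventually_gt_at_top[of 0]
  proof eventually_elim
    case (elim x)
    show ?case unfolding G_def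
    proof (rule weighted_sum_le_split)
      fix k assume "real k \<le> \<delta> * x"
      then have "real k * \<alpha> \<le> \<delta> * x * \<alpha>" using alpha_pos by (intro mult_right_mono) auto
      also have "\<delta> * x * \<alpha> = \<epsilon> * x / 2" using alpha_pos by (simp add: \<delta>_def)
      finally show "sum_tail k x \<le> real k * tail ((1 - \<epsilon>) * x) + (real k)\<^sup>2 * (tail (\<theta> * x))\<^sup>2 + E x"
        using elim(1) by blast
    next
      fix k assume "real k \<le> t * x"
      then have "real k * \<alpha> \<le> t * x * \<alpha>" using alpha_pos by (intro mult_right_mono) auto
      also have "t * x * \<alpha> = (1 - \<epsilon>) * x" using alpha_pos by (simp add: t_def)
      finally show "sum_tail k x \<le> real k * tail (\<theta>' * x) + E' x"
        using elim(2) by blast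
    qed (use elim \<delta> E E' in \<open>auto simp: sum_tail_nonneg sum_tail_le_1 tail_nonneg\<close>)
  qed
  moreover have "((\<lambda>x. G x / tail x) \<longlongrightarrow> m * (1 - \<epsilon>) powr (-\<kappa>) + m * \<delta> / \<theta> * (0 * \<theta> powr (-\<kappa>))
      + 0 + 0 * \<theta>' powr (-\<kappa>) + 0 + c * t powr (-\<kappa>)) at_top"
  proof -
    have "G x / tail x = m * (tail ((1 - \<epsilon>) * x) / tail x)
        + m * \<delta> / \<theta> * (\<theta> * x * tail (\<theta> * x) * (tail (\<theta> * x) / tail x)) + E x / tail x
        + count_mean_tail (\<delta> * x) * (tail (\<theta>' * x) / tail x) + E' x / tail x
        + count_tail (t * x) / tail x" for x
      using \<theta> by (simp add: G_def add_divide_distrib power2_eq_square)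
    moreover note tendsto_tail_ratio tendsto_rescale_at_top[OF tendsto_x_times_tail_0 \<theta>]
      tendsto_rescale_at_top[OF tendsto_count_mean_tail_0 \<delta>] tendsto_count_tail_rescaled[OF t]
    ultimately show ?thesis
      using \<epsilon> \<theta> \<theta>' E(2) E'(2) by (simp only:) (intro tendsto_add tendsto_mult tendsto_const; simp)
  qed
  ultimately show ?thesis by (intro exI[of _ G]) (simp add: t_def)
qed

lemma compound_minorant:
  assumes \<epsilon>: "0 < \<epsilon>" "\<epsilon> < 1"
  shows "\<exists>H. (\<forall>\<^sub>F x in at_top. H x \<le> (\<Sum>k. p k * sum_tail k x)) \<and>
    ((\<lambda>x. H x / tail x) \<longlongrightarrow> m + (1 - \<epsilon>) * (c * ((1 + \<epsilon>) / \<alpha>) powr (-\<kappa>))) at_top"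
proof -
  define u where "u = (1 + \<epsilon>) / \<alpha>"
  have u: "u > 0" using \<epsilon> alpha_pos by (simp add: u_def)
  have "\<alpha> / (1 + \<epsilon>) < \<alpha>" using \<epsilon> alpha_pos by (simp add: field_simps)
  then obtain K where K: "\<forall>k\<ge>K. \<forall>x. x \<le> real k * (\<alpha> / (1 + \<epsilon>)) \<longrightarrow> 1 - \<epsilon> \<le> sum_tail k x"
    using sum_tail_eventually_ge \<epsilon>(1) by blast
  define H where "H x = (m - count_mean_tail (u * x)) * (tail x - u * x * (tail x)\<^sup>2)
      + count_tail (u * x) * (1 - \<epsilon>)" for x
  have "\<forall>\<^sub>F x in at_top. H x \<le> (\<Sum>k. p k * sum_tail k x)"
    using eventually_ge_at_top[of "real K / u"]
  proof eventually_elim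
    case (elim x)
    show ?case unfolding H_def
    proof (rule weighted_sum_ge_split)
      fix k assume k: "real k \<le> u * x"
      then have "(real k)\<^sup>2 * (tail x)\<^sup>2 \<le> real k * (u * x) * (tail x)\<^sup>2"
        by (intro mult_right_mono) (auto simp: power2_eq_square intro!: mult_left_mono)
      then show "real k * (tail x - u * x * (tail x)\<^sup>2) \<le> sum_tail k x"
        using sum_tail_ge_quadratic[of k x] by (simp add: algebra_simps)
    next
      fix k assume k: "u * x < real k"
      have "real K \<le> u * x" using elim u by (simp add: field_simps)
      then have "K \<le> k" using k by linarith
      moreover have "x \<le> real k * (\<alpha> / (1 + \<epsilon>))"
        using k alpha_pos \<epsilon> by (simp add: u_def field_simps)
      ultimately show "1 - \<epsilon> \<le> sum_tail k x" using K by blast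
    qed (auto simp: sum_tail_nonneg sum_tail_le_1)
  qed
  moreover have "((\<lambda>x. H x / tail x) \<longlongrightarrow> m + (1 - \<epsilon>) * (c * ((1 + \<epsilon>) / \<alpha>) powr (-\<kappa>))) at_top"
  proof -
    have "((\<lambda>x. (1 - u * (x * tail x)) * (m - count_mean_tail (u * x))
        + (1 - \<epsilon>) * (count_tail (u * x) / tail x))
        \<longlongrightarrow> (1 - u * 0) * (m - 0) + (1 - \<epsilon>) * (c * u powr (-\<kappa>))) at_top"
      by (intro tendsto_x_times_tail_0 tendsto_rescale_at_top[OF tendsto_count_mean_tail_0 u]
          tendsto_count_tail_rescaled[OF u] tendsto_add tendsto_mult tendsto_diff tendsto_const)
    moreover have "\<forall>\<^sub>F x in at_top. (1 - u * (x * tail x)) * (m - count_mean_tail (u * x))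
        + (1 - \<epsilon>) * (count_tail (u * x) / tail x) = H x / tail x"
      using eventually_tail_pos by eventually_elim (simp add: H_def field_simps power2_eq_square)
    ultimately show ?thesis by (simp add: Lim_transform_eventually u_def)
  qed
  ultimately show ?thesis by blast
qed

theorem tendsto_compound_tail:
  "((\<lambda>x. (\<Sum>k. p k * sum_tail k x) / tail x) \<longlongrightarrow> m + c * \<alpha> powr \<kappa>) at_top"
proof -
  have \<alpha>: "(1 / \<alpha>) powr (-\<kappa>) = \<alpha> powr \<kappa>"
    using alpha_pos by (simp add: powr_minus powr_divide)
  show ?thesis
  proof (rule order_tendstoI)
    fix a assume "a < m + c * \<alpha> powr \<kappa>"
    moreover have "((\<lambda>\<epsilon>. m + (1 - \<epsilon>) * (c * ((1 + \<epsilon>) / \<alpha>) powr (-\<kappa>)))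
        \<longlongrightarrow> m + (1 - 0) * (c * ((1 + 0) / \<alpha>) powr (-\<kappa>))) (at_right 0)"
      using alpha_pos by (intro tendsto_intros) auto
    ultimately have "\<forall>\<^sub>F \<epsilon> in at_right 0. a < m + (1 - \<epsilon>) * (c * ((1 + \<epsilon>) / \<alpha>) powr (-\<kappa>))"
      by (intro order_tendstoD(1)) (auto simp: \<alpha>)
    then obtain \<epsilon> where \<epsilon>: "0 < \<epsilon>" "\<epsilon> < 1" "a < m + (1 - \<epsilon>) * (c * ((1 + \<epsilon>) / \<alpha>) powr (-\<kappa>))"
      using eventually_at_right_0_witness by blast
    then obtain H where H: "\<forall>\<^sub>F x in at_top. H x \<le> (\<Sum>k. p k * sum_tail k x)"
      "((\<lambda>x. H x / tail x) \<longlongrightarrow> m + (1 - \<epsilon>) * (c * ((1 + \<epsilon>) / \<alpha>) powr (-\<kappa>))) at_top"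
      using compound_minorant by blast
    show "\<forall>\<^sub>F x in at_top. a < (\<Sum>k. p k * sum_tail k x) / tail x"
      using order_tendstoD(1)[OF H(2) \<epsilon>(3)] H(1) eventually_tail_pos
      by eventually_elim (meson divide_right_mono less_imp_le less_le_trans)
  next
    fix b assume "m + c * \<alpha> powr \<kappa> < b"
    moreover have "((\<lambda>\<epsilon>. m * (1 - \<epsilon>) powr (-\<kappa>) + c * ((1 - \<epsilon>) / \<alpha>) powr (-\<kappa>))
        \<longlongrightarrow> m * (1 - 0) powr (-\<kappa>) + c * ((1 - 0) / \<alpha>) powr (-\<kappa>)) (at_right 0)"
      using alpha_pos by (intro tendsto_intros) auto
    ultimately have "\<forall>\<^sub>F \<epsilon> in at_right 0. m * (1 - \<epsilon>) powr (-\<kappa>) + c * ((1 - \<epsilon>) / \<alpha>) powr (-\<kappa>) < b"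
      by (intro order_tendstoD(2)) (auto simp: \<alpha>)
    then obtain \<epsilon> where \<epsilon>: "0 < \<epsilon>" "\<epsilon> < 1" "m * (1 - \<epsilon>) powr (-\<kappa>) + c * ((1 - \<epsilon>) / \<alpha>) powr (-\<kappa>) < b"
      using eventually_at_right_0_witness by blast
    then obtain G where G: "\<forall>\<^sub>F x in at_top. (\<Sum>k. p k * sum_tail k x) \<le> G x"
      "((\<lambda>x. G x / tail x) \<longlongrightarrow> m * (1 - \<epsilon>) powr (-\<kappa>) + c * ((1 - \<epsilon>) / \<alpha>) powr (-\<kappa>)) at_top"
      using compound_majorant by blast
    show "\<forall>\<^sub>F x in at_top. (\<Sum>k. p k * sum_tail k x) / tail x < b"
      using order_tendstoD(2)[OF G(2) \<epsilon>(3)] G(1) eventually_tail_pos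
      by eventually_elim (meson divide_right_mono less_imp_le le_less_trans)
  qed
qed

end

section \<open>The Galton--Watson process\<close>

lemma gw_Z_measurable:
  assumes "\<And>k i. k \<le> n \<Longrightarrow> \<xi> k i \<in> measurable N (count_space UNIV)"
  shows "gw_Z \<xi> n \<in> measurable N (count_space UNIV)"
  using assms
proof (induction n)
  case 0
  then show ?case by simp
next
  case (Suc n)
  have [measurable]: "\<xi> (Suc n) i \<in> measurable N (count_space UNIV)" for i
    using Suc.prems by simp
  have "(\<lambda>\<omega>. (\<lambda>z \<omega>. \<Sum>i\<in>{1..z}. \<xi> (Suc n) i \<omega>) (gw_Z \<xi> n \<omega>) \<omega>) \<in> measurable N (count_space UNIV)"
    by (rule measurable_compose_countable'[where I = UNIV]) (use Suc in auto)
  then show ?case by simp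
qed

lemma gw_Z_cong:
  assumes "\<And>k i. k \<le> n \<Longrightarrow> \<xi> k i \<omega> = \<xi>' k i \<omega>'"
  shows "gw_Z \<xi> n \<omega> = gw_Z \<xi>' n \<omega>'"
  using assms by (induction n) auto

lemma gw_Z_Suc_lessThan: "gw_Z \<xi> (Suc n) \<omega> = (\<Sum>i<gw_Z \<xi> n \<omega>. \<xi> (Suc n) (Suc i) \<omega>)"
  by (simp add: sum.atLeast1_atMost_eq)

context prob_space
begin

lemma sums_prob_nat_eq:
  assumes [measurable]: "V \<in> measurable M (count_space UNIV)"
  shows "(\<lambda>k. prob {\<omega>\<in>space M. V \<omega> = k}) sums 1"
proof -
  have "(\<lambda>k. prob {\<omega>\<in>space M. V \<omega> = k}) sums prob (\<Union>k. {\<omega>\<in>space M. V \<omega> = k})"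
    by (rule finite_measure_UNION) (auto simp: disjoint_family_on_def)
  moreover have "(\<Union>k. {\<omega>\<in>space M. V \<omega> = k}) = space M" by auto
  ultimately show ?thesis by (simp add: prob_space)
qed

lemma sums_prob_nat_gt:
  assumes [measurable]: "V \<in> measurable M (count_space UNIV)"
  shows "(\<lambda>k. if real k > y then prob {\<omega>\<in>space M. V \<omega> = k} else 0)
    sums prob {\<omega>\<in>space M. real (V \<omega>) > y}"
proof -
  define A where "A k = (if real k > y then {\<omega>\<in>space M. V \<omega> = k} else {})" for k
  have "(\<lambda>k. prob (A k)) sums prob (\<Union>k. A k)"
    by (rule finite_measure_UNION) (auto simp: disjoint_family_on_def A_def)
  moreover have "(\<Union>k. A k) = {\<omega>\<in>space M. real (V \<omega>) > y}" by (auto simp: A_def)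
  ultimately show ?thesis by (simp add: A_def if_distrib cong: if_cong)
qed

lemma sums_nat_mean:
  assumes [measurable]: "V \<in> measurable M (count_space UNIV)"
    and r: "(\<integral>\<^sup>+\<omega>. ennreal (real (V \<omega>)) \<partial>M) = ennreal r" "0 \<le> r"
  shows "(\<lambda>k. real k * prob {\<omega>\<in>space M. V \<omega> = k}) sums r"
proof -
  have "(\<integral>\<^sup>+\<omega>. ennreal (real (V \<omega>)) \<partial>M)
      = (\<integral>\<^sup>+\<omega>. (\<Sum>k. ennreal (real k) * indicator {\<omega>\<in>space M. V \<omega> = k} \<omega>) \<partial>M)"
  proof (intro nn_integral_cong)
    fix \<omega> assume "\<omega> \<in> space M"
    then have "(\<Sum>k. ennreal (real k) * indicator {\<omega>\<in>space M. V \<omega> = k} \<omega>)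
        = (\<Sum>k\<in>{V \<omega>}. ennreal (real k) * indicator {\<omega>\<in>space M. V \<omega> = k} \<omega>)"
      by (intro suminf_finite) auto
    then show "ennreal (real (V \<omega>)) = (\<Sum>k. ennreal (real k) * indicator {\<omega>\<in>space M. V \<omega> = k} \<omega>)"
      using \<open>\<omega> \<in> space M\<close> by simp
  qed
  also have "\<dots> = (\<Sum>k. ennreal (real k * prob {\<omega>\<in>space M. V \<omega> = k}))"
    by (simp add: nn_integral_suminf nn_integral_cmult emeasure_eq_measure ennreal_mult)
  finally have "(\<lambda>k. ennreal (real k * prob {\<omega>\<in>space M. V \<omega> = k})) sums ennreal r"
    using r(1) summable_sums[OF summableI] by metis
  then show ?thesis using r(2) by (subst (asm) sums_ennreal) auto
qed

lemma nn_integral_indep_var_mult: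
  fixes f g :: "'a \<Rightarrow> ennreal"
  assumes "indep_var borel f borel g"
  shows "(\<integral>\<^sup>+\<omega>. f \<omega> * g \<omega> \<partial>M) = (\<integral>\<^sup>+\<omega>. f \<omega> \<partial>M) * (\<integral>\<^sup>+\<omega>. g \<omega> \<partial>M)"
proof -
  have borel: "(\<lambda>_. borel) = case_bool borel borel"
    by (rule ext) (simp split: bool.split)
  have "indep_vars (\<lambda>_. borel) (case_bool f g) UNIV"
    using assms unfolding indep_var_def borel .
  then have "(\<integral>\<^sup>+\<omega>. (\<Prod>i\<in>UNIV. case_bool f g i \<omega>) \<partial>M) = (\<Prod>i\<in>UNIV. \<integral>\<^sup>+\<omega>. case_bool f g i \<omega> \<partial>M)"
    by (intro indep_vars_nn_integral) auto
  then show ?thesis by (simp add: UNIV_bool mult.commute)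
qed

end

locale galton_watson = regularly_varying_tail +
  fixes \<xi> :: "nat \<Rightarrow> nat \<Rightarrow> 'a \<Rightarrow> nat"
  assumes \<xi>_measurable[measurable]: "\<And>k i. \<xi> k i \<in> measurable M (count_space UNIV)"
    and \<xi>_indep: "indep_vars (\<lambda>_. count_space UNIV) (\<lambda>(k, i). \<xi> k i) UNIV"
    and distr_\<xi>: "\<And>k i. distr M (count_space UNIV) (\<xi> k i) = distr M (count_space UNIV) X"
begin

abbreviation Z :: "nat \<Rightarrow> 'a \<Rightarrow> nat" where
  "Z \<equiv> gw_Z \<xi>"

text \<open>Total offspring of the individuals \<open>1, ..., k\<close> of generation \<open>n\<close>; as in \<open>gw_Z\<close>,
  individuals are numbered from \<open>1\<close>.\<close>
abbreviation offspring_sum :: "nat \<Rightarrow> nat \<Rightarrow> 'a \<Rightarrow> nat" where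
  "offspring_sum n k \<omega> \<equiv> \<Sum>i<k. \<xi> (Suc n) (Suc i) \<omega>"

lemma Z_measurable[measurable]: "Z n \<in> measurable M (count_space UNIV)"
  by (rule gw_Z_measurable) simp

lemma iid_copies_offspring: "iid_copies M X \<kappa> L (\<lambda>i. \<xi> (Suc n) (Suc i))"
proof unfold_locales
  have "indep_vars (\<lambda>j. PiM {(Suc n, Suc j)} (\<lambda>_. count_space UNIV))
      (\<lambda>j \<omega>. restrict (\<lambda>p. (\<lambda>(k, i). \<xi> k i) p \<omega>) {(Suc n, Suc j)}) UNIV"
    by (rule indep_vars_restrict[OF \<xi>_indep]) (auto simp: disjoint_family_on_def)
  then have "indep_vars (\<lambda>_. count_space UNIV)
      (\<lambda>j \<omega>. (\<lambda>f. f (Suc n, Suc j)) (restrict (\<lambda>p. (\<lambda>(k, i). \<xi> k i) p \<omega>) {(Suc n, Suc j)})) UNIV"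
    by (rule indep_vars_compose2) (auto intro!: measurable_component_singleton)
  then show "indep_vars (\<lambda>_. count_space UNIV) (\<lambda>i. \<xi> (Suc n) (Suc i)) UNIV" by simp
qed (auto simp: distr_\<xi>)

text \<open>\<open>Z n\<close> depends only on the generations up to \<open>n\<close>, which are independent of generation
  \<open>n + 1\<close>.\<close>
lemma indep_Z_offspring_sum:
  "indep_var (count_space UNIV) (Z n) (count_space UNIV) (offspring_sum n k)"
proof -
  define A where "A = {p :: nat \<times> nat. fst p \<le> n}"
  define B where "B = {p :: nat \<times> nat. fst p = Suc n}"
  let ?restr = "\<lambda>S \<omega>. restrict (\<lambda>p. (\<lambda>(k, i). \<xi> k i) p \<omega>) S"
  have "indep_var (PiM A (\<lambda>_. count_space UNIV)) (?restr A) (PiM B (\<lambda>_. count_space UNIV)) (?restr B)"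
    by (rule indep_var_restrict[OF \<xi>_indep]) (auto simp: A_def B_def)
  moreover have "gw_Z (\<lambda>k i f. f (k, i)) n \<in> measurable (PiM A (\<lambda>_. count_space UNIV)) (count_space UNIV)"
    by (rule gw_Z_measurable) (auto simp: A_def)
  moreover have "(\<lambda>f. \<Sum>i<k. f (Suc n, Suc i) :: nat) \<in> measurable (PiM B (\<lambda>_. count_space UNIV)) (count_space UNIV)"
    unfolding B_def by measurable
  ultimately have "indep_var (count_space UNIV) (gw_Z (\<lambda>k i f. f (k, i)) n \<circ> ?restr A)
      (count_space UNIV) ((\<lambda>f. \<Sum>i<k. f (Suc n, Suc i) :: nat) \<circ> ?restr B)"
    by (rule indep_var_compose)
  moreover have "gw_Z (\<lambda>k i f. f (k, i)) n \<circ> ?restr A = Z n"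
    by (rule ext) (simp, rule gw_Z_cong, simp add: A_def)
  moreover have "(\<lambda>f. \<Sum>i<k. f (Suc n, Suc i) :: nat) \<circ> ?restr B = offspring_sum n k"
    by (rule ext) (simp add: B_def)
  ultimately show ?thesis by simp
qed

lemma sums_prob_Z_Suc_gt:
  "(\<lambda>k. prob {\<omega>\<in>space M. Z n \<omega> = k} * prob {\<omega>\<in>space M. real (offspring_sum n k \<omega>) > x})
     sums prob {\<omega>\<in>space M. real (Z (Suc n) \<omega>) > x}"
proof -
  define D where "D k = {\<omega>\<in>space M. Z n \<omega> = k \<and> real (offspring_sum n k \<omega>) > x}" for k
  have D: "D k \<in> events" for k
    unfolding D_def by measurable
  have "(\<lambda>k. prob (D k)) sums prob (\<Union>k. D k)"
    by (rule finite_measure_UNION) (use D in \<open>auto simp: disjoint_family_on_def D_def\<close>)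
  moreover have "(\<Union>k. D k) = {\<omega>\<in>space M. real (Z (Suc n) \<omega>) > x}"
    by (auto simp: D_def gw_Z_Suc_lessThan simp del: gw_Z.simps(2))
  moreover have "prob (D k) = prob {\<omega>\<in>space M. Z n \<omega> = k}
      * prob {\<omega>\<in>space M. real (offspring_sum n k \<omega>) > x}" for k
    using prob_indep_random_variable[OF indep_Z_offspring_sum, of "{k}" "{v. real v > x}"]
    by (simp add: D_def)
  ultimately show ?thesis by simp
qed

lemma nn_integral_offspring_sum:
  "(\<integral>\<^sup>+\<omega>. ennreal (real (offspring_sum n k \<omega>)) \<partial>M) = ennreal (real k * \<alpha>)"
proof -
  have "(\<integral>\<^sup>+\<omega>. ennreal (real (\<xi> l i \<omega>)) \<partial>M) = ennreal \<alpha>" for l i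
  proof -
    have "(\<integral>\<^sup>+\<omega>. ennreal (real (\<xi> l i \<omega>)) \<partial>M)
        = (\<integral>\<^sup>+v. ennreal (real v) \<partial>distr M (count_space UNIV) (\<xi> l i))"
      by (rule nn_integral_distr[symmetric]) auto
    also have "\<dots> = (\<integral>\<^sup>+\<omega>. ennreal (real (X \<omega>)) \<partial>M)"
      unfolding distr_\<xi> by (rule nn_integral_distr) auto
    also have "\<dots> = ennreal \<alpha>"
      unfolding \<alpha>_def by (rule nn_integral_eq_integral[OF integrable_X]) auto
    finally show ?thesis .
  qed
  note \<xi>_mean = this
  have "(\<integral>\<^sup>+\<omega>. ennreal (real (offspring_sum n k \<omega>)) \<partial>M)
      = (\<integral>\<^sup>+\<omega>. (\<Sum>i<k. ennreal (real (\<xi> (Suc n) (Suc i) \<omega>))) \<partial>M)"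
    by (intro nn_integral_cong) (simp add: of_nat_sum)
  also have "\<dots> = (\<Sum>i<k. \<integral>\<^sup>+\<omega>. ennreal (real (\<xi> (Suc n) (Suc i) \<omega>)) \<partial>M)"
    by (rule nn_integral_sum) simp
  also have "\<dots> = ennreal (real k * \<alpha>)"
    using alpha_pos by (simp add: \<xi>_mean ennreal_mult ennreal_of_nat_eq_real_of_nat)
  finally show ?thesis .
qed

lemma nn_integral_indicator_Z_times_offspring_sum:
  "(\<integral>\<^sup>+\<omega>. ennreal (indicator {k} (Z n \<omega>)) * ennreal (real (offspring_sum n k \<omega>)) \<partial>M)
    = ennreal (\<alpha> * (real k * prob {\<omega>\<in>space M. Z n \<omega> = k}))"
proof -
  have "indep_var borel ((\<lambda>z. ennreal (indicator {k} z)) \<circ> Z n)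
      borel ((\<lambda>v. ennreal (real v)) \<circ> offspring_sum n k)"
    by (rule indep_var_compose[OF indep_Z_offspring_sum]) auto
  from nn_integral_indep_var_mult[OF this, unfolded comp_def]
  have "(\<integral>\<^sup>+\<omega>. ennreal (indicator {k} (Z n \<omega>)) * ennreal (real (offspring_sum n k \<omega>)) \<partial>M)
      = (\<integral>\<^sup>+\<omega>. ennreal (indicator {k} (Z n \<omega>)) \<partial>M) * ennreal (real k * \<alpha>)"
    by (simp only: nn_integral_offspring_sum)
  also have "(\<integral>\<^sup>+\<omega>. ennreal (indicator {k} (Z n \<omega>)) \<partial>M) = ennreal (prob {\<omega>\<in>space M. Z n \<omega> = k})"
    by (subst nn_integral_cong[where v = "indicator {\<omega>\<in>space M. Z n \<omega> = k}"])
      (auto simp: emeasure_eq_measure indicator_def)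
  finally show ?thesis
    using alpha_pos by (simp add: ennreal_mult[symmetric] mult_ac)
qed

lemma sums_mean_Z: "(\<lambda>k. real k * prob {\<omega>\<in>space M. Z n \<omega> = k}) sums \<alpha> ^ n"
proof (induction n)
  case 0
  have "(\<lambda>k. real k * prob {\<omega>\<in>space M. Z 0 \<omega> = k}) = (\<lambda>k. if k = 1 then 1 else 0)"
    by (auto simp: fun_eq_iff prob_space)
  then show ?case using sums_single[of 1 "\<lambda>_. 1::real"] by simp
next
  case (Suc n)
  let ?p = "\<lambda>k. prob {\<omega>\<in>space M. Z n \<omega> = k}"
  let ?F = "\<lambda>k \<omega>. ennreal (indicator {k} (Z n \<omega>)) * ennreal (real (offspring_sum n k \<omega>))"
  have F_measurable: "?F k \<in> borel_measurable M" for k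
  proof -
    have [measurable]: "(\<lambda>\<omega>. ennreal (indicator {k} (Z n \<omega>))) \<in> borel_measurable M"
      using Z_measurable by (rule measurable_compose) simp
    have "offspring_sum n k \<in> measurable M (count_space UNIV)" by measurable
    then have [measurable]: "(\<lambda>\<omega>. ennreal (real (offspring_sum n k \<omega>))) \<in> borel_measurable M"
      by (rule measurable_compose) simp
    show ?thesis by measurable
  qed
  have Z_Suc_split: "ennreal (real (Z (Suc n) \<omega>)) = (\<Sum>k. ?F k \<omega>)" for \<omega>
    using suminf_finite[of "{Z n \<omega>}" "\<lambda>k. ?F k \<omega>"]
    by (simp add: gw_Z_Suc_lessThan del: gw_Z.simps(2))
  have "(\<lambda>k. ennreal (\<alpha> * (real k * ?p k))) sums ennreal (\<alpha> * \<alpha> ^ n)"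
    using Suc.IH alpha_pos by (subst sums_ennreal) (auto intro: sums_mult)
  have "(\<integral>\<^sup>+\<omega>. ennreal (real (Z (Suc n) \<omega>)) \<partial>M) = (\<integral>\<^sup>+\<omega>. (\<Sum>k. ?F k \<omega>) \<partial>M)"
    using Z_Suc_split by (simp only:)
  also have "\<dots> = (\<Sum>k. \<integral>\<^sup>+\<omega>. ?F k \<omega> \<partial>M)"
    by (rule nn_integral_suminf[OF F_measurable])
  also have "\<dots> = (\<Sum>k. ennreal (\<alpha> * (real k * ?p k)))"
    by (simp only: nn_integral_indicator_Z_times_offspring_sum)
  also have "\<dots> = ennreal (\<alpha> * \<alpha> ^ n)"
    using \<open>(\<lambda>k. ennreal (\<alpha> * (real k * ?p k))) sums ennreal (\<alpha> * \<alpha> ^ n)\<close>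
    by (rule sums_unique[symmetric])
  finally show ?case using alpha_pos by (intro sums_nat_mean) auto
qed

lemma tendsto_tail_Z_Suc:
  assumes "((\<lambda>y. prob {\<omega>\<in>space M. real (Z n \<omega>) > y} / tail y) \<longlongrightarrow> c) at_top"
  shows "((\<lambda>x. prob {\<omega>\<in>space M. real (Z (Suc n) \<omega>) > x} / tail x) \<longlongrightarrow> \<alpha> ^ n + c * \<alpha> powr \<kappa>) at_top"
proof -
  interpret N: random_index M X \<kappa> L "\<lambda>k. prob {\<omega>\<in>space M. Z n \<omega> = k}" "\<alpha> ^ n"
    by unfold_locales (auto intro: sums_prob_nat_eq sums_mean_Z)
  interpret iid_copies M X \<kappa> L "\<lambda>i. \<xi> (Suc n) (Suc i)"
    by (rule iid_copies_offspring)
  have "N.count_tail y = prob {\<omega>\<in>space M. real (Z n \<omega>) > y}" for y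
    using sums_unique2[OF N.count_tail_sums sums_prob_nat_gt[OF Z_measurable]] .
  then interpret compound_tail M X \<kappa> L "\<lambda>k. prob {\<omega>\<in>space M. Z n \<omega> = k}" "\<alpha> ^ n"
    "\<lambda>i. \<xi> (Suc n) (Suc i)" c
    by unfold_locales (simp add: assms)
  have "(\<Sum>k. prob {\<omega>\<in>space M. Z n \<omega> = k} * sum_tail k x) = prob {\<omega>\<in>space M. real (Z (Suc n) \<omega>) > x}" for x
    unfolding sum_tail_def by (rule sums_unique[symmetric, OF sums_prob_Z_Suc_gt])
  then show ?thesis using tendsto_compound_tail by simp
qed

lemma tendsto_tail_ratio_Z:
  assumes "\<alpha> < 1"
  shows "((\<lambda>x. prob {\<omega>\<in>space M. real (Z n \<omega>) > x} / tail x)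
    \<longlongrightarrow> (\<alpha> ^ n - \<alpha> powr (\<kappa> * real n)) / (\<alpha> - \<alpha> powr \<kappa>)) at_top"
proof (induction n)
  case 0
  have "\<forall>\<^sub>F x in at_top. 0 = prob {\<omega>\<in>space M. real (Z 0 \<omega>) > x} / tail x"
    using eventually_ge_at_top[of 1] by eventually_elim auto
  then show ?case by (simp add: Lim_transform_eventually[OF tendsto_const])
next
  case (Suc n)
  have "\<alpha> - \<alpha> powr \<kappa> \<noteq> 0" using powr_kappa_less_alpha[OF assms] by simp
  moreover have "\<alpha> powr (\<kappa> * real (Suc n)) = \<alpha> powr \<kappa> * \<alpha> powr (\<kappa> * real n)"
    by (simp add: powr_add[symmetric] algebra_simps)
  ultimately have "\<alpha> ^ n + (\<alpha> ^ n - \<alpha> powr (\<kappa> * real n)) / (\<alpha> - \<alpha> powr \<kappa>) * \<alpha> powr \<kappa>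
      = (\<alpha> ^ Suc n - \<alpha> powr (\<kappa> * real (Suc n))) / (\<alpha> - \<alpha> powr \<kappa>)"
    by (simp add: field_simps)
  then show ?case using tendsto_tail_Z_Suc[OF Suc.IH] by simp
qed

end

theorem lemma2p2:
  fixes M :: "'a measure" and \<xi> :: "nat \<Rightarrow> nat \<Rightarrow> 'a \<Rightarrow> nat"
    and X :: "'a \<Rightarrow> nat" and \<kappa> :: real and n :: nat
  assumes "prob_space M"
    and meas: "\<And>k i. \<xi> k i \<in> measurable M (count_space UNIV)"
    and measX: "X \<in> measurable M (count_space UNIV)"
    and indep: "prob_space.indep_vars M (\<lambda>_. count_space UNIV) (\<lambda>(k, i). \<xi> k i) UNIV"
    and ident: "\<And>k i. distr M (count_space UNIV) (\<xi> k i) = distr M (count_space UNIV) X"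
    and mean: "prob_space.expectation M (\<lambda>\<omega>. real (X \<omega>)) < 1"
    and kappa: "\<kappa> > 1"
    and regvar: "\<exists>L. slowly_varying L \<and>
        (\<forall>x>0. measure M {\<omega> \<in> space M. real (X \<omega>) > x} = x powr (-\<kappa>) * L x)"
    and "n \<ge> 1"
  shows "(\<lambda>x. measure M {\<omega> \<in> space M. real (gw_Z \<xi> n \<omega>) > x}) \<sim>[at_top]
         (\<lambda>x. (let \<alpha> = prob_space.expectation M (\<lambda>\<omega>. real (X \<omega>)) in
                 (\<alpha> ^ n - \<alpha> powr (\<kappa> * real n)) / (\<alpha> - \<alpha> powr \<kappa>))
              * measure M {\<omega> \<in> space M. real (X \<omega>) > x})"
proof -
  interpret prob_space M by (rule assms(1))
  obtain L where L: "slowly_varying L" "\<And>x. x > 0 \<Longrightarrow> prob {\<omega> \<in> space M. real (X \<omega>) > x} = x powr (-\<kappa>) * L x"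
    using regvar by auto
  interpret galton_watson M X \<kappa> L \<xi>
    by unfold_locales (use meas measX indep ident kappa L in auto)
  define c where "c = (\<alpha> ^ n - \<alpha> powr (\<kappa> * real n)) / (\<alpha> - \<alpha> powr \<kappa>)"
  have "\<alpha> < 1" using mean by (simp add: \<alpha>_def)
  have "0 < c"
  proof -
    have "0 < \<alpha> - \<alpha> powr \<kappa>" using powr_kappa_less_alpha[OF \<open>\<alpha> < 1\<close>] by simp
    moreover have "\<alpha> powr (\<kappa> * real n) < \<alpha> powr real n"
      using alpha_pos \<open>\<alpha> < 1\<close> kappa \<open>n \<ge> 1\<close> by (intro powr_less_mono') auto
    then have "0 < \<alpha> ^ n - \<alpha> powr (\<kappa> * real n)" using alpha_pos by (simp add: powr_realpow)
    ultimately show ?thesis unfolding c_def by (rule divide_pos_pos[rotated])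
  qed
  have "((\<lambda>x. prob {\<omega>\<in>space M. real (Z n \<omega>) > x} / tail x) \<longlongrightarrow> c) at_top"
    unfolding c_def by (rule tendsto_tail_ratio_Z[OF \<open>\<alpha> < 1\<close>])
  then have "(\<lambda>x. prob {\<omega>\<in>space M. real (Z n \<omega>) > x}) \<sim>[at_top] (\<lambda>x. c * tail x)"
    using \<open>0 < c\<close> by (intro asymp_equivI'_const) auto
  then show ?thesis unfolding c_def tail_def \<alpha>_def Let_def .
qed

end
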